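(* Let $(\mathcal L,\langle\,,\,\rangle)$ be a (right) Leibniz algebra over a field $\mathbf{k}$, $k\in\mathbf{k}$, and $H:=\mathcal U^{\langle4\text{-th}\rangle}_k(\mathcal L)$ its enveloping$^{\langle4\text{-th}\rangle}$ algebra (constructed in the context) with multiplication $m$, unit map $u$ and distinguished idempotent $q$, with $x\in\mathcal L$ identified with its image in $H$. Let $\Delta,\varepsilon,\mathcal S$ be linear maps satisfying $$\Delta(q)=q\otimes q,\quad \Delta(x)=(x+kqx-xq)\otimes1+1\otimes(x+kqx-xq)+(-kqx+xq)\otimes q+q\otimes(-kqx+xq),$$ $$\varepsilon(q)=1,\quad \varepsilon(x)=0,\quad \mathcal S(q)=1-q,\quad \mathcal S(x)=-\tfrac1k x+\big(\tfrac1k-k\big)xq\qquad(x\in\mathcal L),$$ and let $\sigma:H\to H$ be the algebra homomorphism $\sigma(a):=a+qa-aq$. Then: (i) if $k=1$, $H$ is a Hopf-like$^{\langle4\text{-th}\rangle_1}$ algebra; (ii) if $k\neq0$, $H$ is a Hopf-like$^{\langle4\text{-th}\rangle_2}$ algebra; with comultiplication $\Delta$, counit $\varepsilon$, antipode-like $\mathcal S$, and (in (ii)) the homomorphism $\sigma$.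
   Context: Construction of $H$: take a basis $X=\{x_j\}$ of $\mathcal L$, a symbol $\tilde q\notin X$, $V$ with basis $X\cup\{\tilde q\}$, $I\subseteq T(V)$ the ideal generated by $\tilde q\otimes\tilde q-\tilde q$ and $\tilde q\otimes a\otimes\tilde q-\tilde q\otimes a$ ($a\in T(V)$), $\hat A=T(V)/I$, $\hat q=\tilde q+I$, $x\mapsto\hat x$ the linear extension of $x_j\mapsto x_j+I$; $R$ the ideal of $\hat A$ generated by $\widehat{\langle x,y\rangle}-\hat x\hat y+\hat y\hat x-\hat y\hat q\hat x+\hat x\hat y\hat q-k\hat x\hat q\hat y+k\hat q\hat y\hat x$; $H=\hat A/R$, $q=\hat q+R$, $x$ denotes $\hat x+R$. Let $(H,m,u,\Delta,\varepsilon)$ be a bialgebra (ordinary: associative unital algebra, coassociative counital coalgebra, $\Delta,\varepsilon$ algebra homomorphisms). It is Hopf-like$^{\langle4\text{-th}\rangle_1}$ if there is a linear $\mathcal S:H\to H$ with $m(\mathcal S\otimes id)\Delta=u\circ\varepsilon\circ\mathcal S=m(id\otimes\mathcal S)\Delta$. It is Hopf-like$^{\langle4\text{-th}\rangle_2}$ if there are an algebra homomorphism $\sigma:H\to H$ and a linear $\mathcal S:H\to H$ with $\sigma\circ m(\mathcal S\otimes id)\Delta=u\circ\varepsilon\circ\mathcal S=m(id\otimes\mathcal S)\Delta$. *)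

theory Defs
  imports "HOL-Library.Poly_Mapping" "HOL-Library.Product_Plus"
begin

datatype 'a wrd = Wrd (unWrd: "'a list")

instantiation wrd :: (type) monoid_add
begin
definition zero_wrd :: "'a wrd" where "zero_wrd = Wrd []"
definition plus_wrd :: "'a wrd \<Rightarrow> 'a wrd \<Rightarrow> 'a wrd"
  where "plus_wrd u v = Wrd (unWrd u @ unWrd v)"
instance
  by standard (auto simp: zero_wrd_def plus_wrd_def)
end

definition psc :: "'k::semiring_0 \<Rightarrow> ('a \<Rightarrow>\<^sub>0 'k) \<Rightarrow> ('a \<Rightarrow>\<^sub>0 'k)"
  where "psc c p = Poly_Mapping.map ((*) c) p"

definition csc :: "'k::zero \<Rightarrow> ('m::zero \<Rightarrow>\<^sub>0 'k)"
  where "csc c = Poly_Mapping.single 0 c"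

text \<open>The letters of V: None is the extra symbol q~, Some j is the basis vector x_j of L.
  T(V) is the free (tensor) algebra: type ('x option wrd =>0 'k).\<close>
type_synonym ('x, 'k) tens = "'x option wrd \<Rightarrow>\<^sub>0 'k"
type_synonym ('x, 'k) tens2 = "('x option wrd \<times> 'x option wrd) \<Rightarrow>\<^sub>0 'k"
type_synonym ('x, 'k) tens3 = "('x option wrd \<times> 'x option wrd \<times> 'x option wrd) \<Rightarrow>\<^sub>0 'k"

definition mono :: "'w \<Rightarrow> ('w \<Rightarrow>\<^sub>0 'k::{zero,one})" where
  "mono u = Poly_Mapping.single u 1"

definition gen :: "'v \<Rightarrow> ('v wrd \<Rightarrow>\<^sub>0 'k::{zero,one})" where
  "gen v = mono (Wrd [v])"

definition qt :: "('x, 'k::{zero,one}) tens" where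
  "qt = gen None"

definition hat :: "('x \<Rightarrow>\<^sub>0 'k::comm_ring_1) \<Rightarrow> ('x, 'k) tens" where
  "hat u = (\<Sum>j\<in>Poly_Mapping.keys u. psc (Poly_Mapping.lookup u j) (gen (Some j)))"

definition tns :: "('a \<Rightarrow>\<^sub>0 'k::comm_ring_1) \<Rightarrow> ('b \<Rightarrow>\<^sub>0 'k) \<Rightarrow> ('a \<times> 'b \<Rightarrow>\<^sub>0 'k)" where
  "tns a b = (\<Sum>u\<in>Poly_Mapping.keys a. \<Sum>v\<in>Poly_Mapping.keys b. Poly_Mapping.single (u, v) (Poly_Mapping.lookup a u * Poly_Mapping.lookup b v))"

definition tns3 :: "('a \<Rightarrow>\<^sub>0 'k::comm_ring_1) \<Rightarrow> ('a \<Rightarrow>\<^sub>0 'k) \<Rightarrow> ('a \<Rightarrow>\<^sub>0 'k)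
     \<Rightarrow> ('a \<times> 'a \<times> 'a \<Rightarrow>\<^sub>0 'k)" where
  "tns3 a b c = (\<Sum>u\<in>Poly_Mapping.keys a. \<Sum>v\<in>Poly_Mapping.keys b. \<Sum>w\<in>Poly_Mapping.keys c.
       Poly_Mapping.single (u, v, w) (Poly_Mapping.lookup a u * Poly_Mapping.lookup b v * Poly_Mapping.lookup c w))"

definition ideal_of :: "'a::ring_1 set \<Rightarrow> 'a set" where
  "ideal_of G = \<Inter>{I. G \<subseteq> I \<and> 0 \<in> I \<and> (\<forall>a\<in>I. \<forall>b\<in>I. a + b \<in> I)
                        \<and> (\<forall>a\<in>I. \<forall>r s. r * a * s \<in> I)}"

section \<open>Leibniz algebras (L = 'x =>0 k, with basis indexed by 'x)\<close>

definition bilinear_br :: "(('x \<Rightarrow>\<^sub>0 'k::field) \<Rightarrow> ('x \<Rightarrow>\<^sub>0 'k) \<Rightarrow> ('x \<Rightarrow>\<^sub>0 'k)) \<Rightarrow> bool" where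
  "bilinear_br br \<longleftrightarrow>
     (\<forall>x y z. br (x + y) z = br x z + br y z) \<and> (\<forall>x y z. br x (y + z) = br x y + br x z) \<and>
     (\<forall>c x y. br (psc c x) y = psc c (br x y)) \<and> (\<forall>c x y. br x (psc c y) = psc c (br x y))"

definition right_leibniz :: "(('x \<Rightarrow>\<^sub>0 'k::field) \<Rightarrow> ('x \<Rightarrow>\<^sub>0 'k) \<Rightarrow> ('x \<Rightarrow>\<^sub>0 'k)) \<Rightarrow> bool" where
  "right_leibniz br \<longleftrightarrow> bilinear_br br \<and>
     (\<forall>x y z. br (br x y) z = br (br x z) y + br x (br y z))"

definition I_gens :: "('x, 'k::comm_ring_1) tens set" where
  "I_gens = {qt * qt - qt} \<union> {qt * a * qt - qt * a | a. True}"

text \<open>Lifts to T(V) of the generators of the ideal R of A^ = T(V)/I.\<close>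
definition R_gens :: "(('x \<Rightarrow>\<^sub>0 'k::field) \<Rightarrow> ('x \<Rightarrow>\<^sub>0 'k) \<Rightarrow> ('x \<Rightarrow>\<^sub>0 'k)) \<Rightarrow> 'k
     \<Rightarrow> ('x, 'k) tens set" where
  "R_gens br k = {hat (br x y) - hat x * hat y + hat y * hat x - hat y * qt * hat x
        + hat x * hat y * qt - psc k (hat x * qt * hat y) + psc k (qt * hat y * hat x) | x y. True}"

text \<open>H = (T(V)/I)/R = T(V)/J, where J is the ideal of T(V) generated by both sets.\<close>
definition JH :: "(('x \<Rightarrow>\<^sub>0 'k::field) \<Rightarrow> ('x \<Rightarrow>\<^sub>0 'k) \<Rightarrow> ('x \<Rightarrow>\<^sub>0 'k)) \<Rightarrow> 'k
     \<Rightarrow> ('x, 'k) tens set" where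
  "JH br k = ideal_of (I_gens \<union> R_gens br k)"

text \<open>Kernels of T(V)^{(x)2} -> H (x) H and T(V)^{(x)3} -> H (x) H (x) H.\<close>
definition J2 :: "('w \<Rightarrow>\<^sub>0 'k::comm_ring_1) set \<Rightarrow> ('w::monoid_add \<times> 'w \<Rightarrow>\<^sub>0 'k) set" where
  "J2 J = ideal_of ({tns j a | j a. j \<in> J} \<union> {tns a j | j a. j \<in> J})"

definition J3 :: "('w \<Rightarrow>\<^sub>0 'k::comm_ring_1) set \<Rightarrow> ('w::monoid_add \<times> 'w \<times> 'w \<Rightarrow>\<^sub>0 'k) set" where
  "J3 J = ideal_of ({tns3 j a b | j a b. j \<in> J} \<union> {tns3 a j b | j a b. j \<in> J}
                    \<union> {tns3 a b j | j a b. j \<in> J})"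

definition hext :: "('v \<Rightarrow> 'a::monoid_mult) \<Rightarrow> 'v wrd \<Rightarrow> 'a" where
  "hext f w = prod_list (map f (unWrd w))"

definition ahext :: "('v \<Rightarrow> 'a::monoid_mult) \<Rightarrow> 'v wrd \<Rightarrow> 'a" where
  "ahext f w = prod_list (map f (rev (unWrd w)))"

definition linT :: "('w \<Rightarrow> ('m \<Rightarrow>\<^sub>0 'k::comm_ring_1)) \<Rightarrow> ('w \<Rightarrow>\<^sub>0 'k) \<Rightarrow> ('m \<Rightarrow>\<^sub>0 'k)" where
  "linT f a = (\<Sum>u\<in>Poly_Mapping.keys a. psc (Poly_Mapping.lookup a u) (f u))"

definition linK :: "('w \<Rightarrow> 'k::comm_ring_1) \<Rightarrow> ('w \<Rightarrow>\<^sub>0 'k) \<Rightarrow> 'k" where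
  "linK f a = (\<Sum>u\<in>Poly_Mapping.keys a. Poly_Mapping.lookup a u * f u)"

text \<open>Delta: the algebra homomorphism T(V) -> T(V) (x) T(V) with the prescribed values
  on q and on the basis vectors x_j (hence, by linearity, on all x in L).\<close>
definition Dgen :: "'k::field \<Rightarrow> 'x option \<Rightarrow> ('x, 'k) tens2" where
  "Dgen k v = (case v of None \<Rightarrow> tns qt qt
     | Some j \<Rightarrow> (let x = gen (Some j) :: ('x, 'k) tens;
                      a = x + psc k (qt * x) - x * qt;
                      b = - psc k (qt * x) + x * qt
                  in tns a 1 + tns 1 a + tns b qt + tns qt b))"

definition Delta :: "'k::field \<Rightarrow> ('x, 'k) tens \<Rightarrow> ('x, 'k) tens2" where
  "Delta k = linT (hext (Dgen k))"

definition Eps :: "('x, 'k::field) tens \<Rightarrow> 'k" where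
  "Eps = linK (hext (\<lambda>v. case v of None \<Rightarrow> 1 | Some j \<Rightarrow> 0))"

definition Sgen :: "'k::field \<Rightarrow> 'x option \<Rightarrow> ('x, 'k) tens" where
  "Sgen k v = (case v of None \<Rightarrow> 1 - qt
     | Some j \<Rightarrow> psc (- (1 / k)) (gen (Some j)) + psc (1 / k - k) (gen (Some j) * qt))"

definition Santi :: "'k::field \<Rightarrow> ('x, 'k) tens \<Rightarrow> ('x, 'k) tens" where
  "Santi k = linT (ahext (Sgen k))"

definition sigma :: "('x, 'k::field) tens \<Rightarrow> ('x, 'k) tens" where
  "sigma a = a + qt * a - a * qt"

definition mSL :: "(('w \<Rightarrow>\<^sub>0 'k) \<Rightarrow> ('w::monoid_add \<Rightarrow>\<^sub>0 'k::comm_ring_1)) \<Rightarrow> ('w \<times> 'w \<Rightarrow>\<^sub>0 'k) \<Rightarrow> ('w \<Rightarrow>\<^sub>0 'k)" where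
  "mSL S y = (\<Sum>p\<in>Poly_Mapping.keys y. psc (Poly_Mapping.lookup y p) (S (mono (fst p)) * mono (snd p)))"

definition mSR :: "(('w \<Rightarrow>\<^sub>0 'k) \<Rightarrow> ('w::monoid_add \<Rightarrow>\<^sub>0 'k::comm_ring_1)) \<Rightarrow> ('w \<times> 'w \<Rightarrow>\<^sub>0 'k) \<Rightarrow> ('w \<Rightarrow>\<^sub>0 'k)" where
  "mSR S y = (\<Sum>p\<in>Poly_Mapping.keys y. psc (Poly_Mapping.lookup y p) (mono (fst p) * S (mono (snd p))))"

definition EL :: "(('w \<Rightarrow>\<^sub>0 'k) \<Rightarrow> 'k) \<Rightarrow> ('w \<times> 'w \<Rightarrow>\<^sub>0 'k::comm_ring_1) \<Rightarrow> ('w \<Rightarrow>\<^sub>0 'k)" where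
  "EL E y = (\<Sum>p\<in>Poly_Mapping.keys y. psc (Poly_Mapping.lookup y p * E (mono (fst p))) (mono (snd p)))"

definition ER :: "(('w \<Rightarrow>\<^sub>0 'k) \<Rightarrow> 'k) \<Rightarrow> ('w \<times> 'w \<Rightarrow>\<^sub>0 'k::comm_ring_1) \<Rightarrow> ('w \<Rightarrow>\<^sub>0 'k)" where
  "ER E y = (\<Sum>p\<in>Poly_Mapping.keys y. psc (Poly_Mapping.lookup y p * E (mono (snd p))) (mono (fst p)))"

text \<open>(Delta (x) id) and (id (x) Delta), T (x) T -> T (x) T (x) T (identifying
  (T (x) T) (x) T = T (x) (T (x) T) = T (x) T (x) T).\<close>
definition DL :: "(('w \<Rightarrow>\<^sub>0 'k) \<Rightarrow> ('w \<times> 'w \<Rightarrow>\<^sub>0 'k)) \<Rightarrow> ('w \<times> 'w \<Rightarrow>\<^sub>0 'k::comm_ring_1)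
     \<Rightarrow> ('w \<times> 'w \<times> 'w \<Rightarrow>\<^sub>0 'k)" where
  "DL D y = (\<Sum>p\<in>Poly_Mapping.keys y. \<Sum>r\<in>Poly_Mapping.keys (D (mono (fst p))).
       Poly_Mapping.single (fst r, snd r, snd p) (Poly_Mapping.lookup y p * Poly_Mapping.lookup (D (mono (fst p))) r))"

definition DR :: "(('w \<Rightarrow>\<^sub>0 'k) \<Rightarrow> ('w \<times> 'w \<Rightarrow>\<^sub>0 'k)) \<Rightarrow> ('w \<times> 'w \<Rightarrow>\<^sub>0 'k::comm_ring_1)
     \<Rightarrow> ('w \<times> 'w \<times> 'w \<Rightarrow>\<^sub>0 'k)" where
  "DR D y = (\<Sum>p\<in>Poly_Mapping.keys y. \<Sum>r\<in>Poly_Mapping.keys (D (mono (snd p))).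
       Poly_Mapping.single (fst p, fst r, snd r) (Poly_Mapping.lookup y p * Poly_Mapping.lookup (D (mono (snd p))) r))"

text \<open>All maps are given on representatives; "f respects J" means it descends to H.
  Equalities in H, H (x) H, H (x) H (x) H are taken modulo J, J2 J, J3 J.\<close>

definition bialgebra_on :: "('w::monoid_add \<Rightarrow>\<^sub>0 'k::comm_ring_1) set
     \<Rightarrow> (('w \<Rightarrow>\<^sub>0 'k) \<Rightarrow> ('w \<times> 'w \<Rightarrow>\<^sub>0 'k)) \<Rightarrow> (('w \<Rightarrow>\<^sub>0 'k) \<Rightarrow> 'k) \<Rightarrow> bool" where
  "bialgebra_on J D E \<longleftrightarrow>
     \<comment> \<open>well-defined on H\<close>
     (\<forall>a\<in>J. D a \<in> J2 J) \<and> (\<forall>a\<in>J. E a = 0) \<and>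
     \<comment> \<open>Delta linear and an algebra homomorphism\<close>
     (\<forall>a b. D (a + b) - (D a + D b) \<in> J2 J) \<and> (\<forall>c a. D (psc c a) - psc c (D a) \<in> J2 J) \<and>
     (\<forall>a b. D (a * b) - D a * D b \<in> J2 J) \<and> D 1 - 1 \<in> J2 J \<and>
     \<comment> \<open>eps linear and an algebra homomorphism\<close>
     (\<forall>a b. E (a + b) = E a + E b) \<and> (\<forall>c a. E (psc c a) = c * E a) \<and>
     (\<forall>a b. E (a * b) = E a * E b) \<and> E 1 = 1 \<and>
     \<comment> \<open>coassociativity\<close>
     (\<forall>a. DL D (D a) - DR D (D a) \<in> J3 J) \<and>
     \<comment> \<open>counit\<close>
     (\<forall>a. EL E (D a) - a \<in> J) \<and> (\<forall>a. ER E (D a) - a \<in> J)"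

definition linear_on :: "('w::monoid_add \<Rightarrow>\<^sub>0 'k::comm_ring_1) set
     \<Rightarrow> (('w \<Rightarrow>\<^sub>0 'k) \<Rightarrow> ('w \<Rightarrow>\<^sub>0 'k)) \<Rightarrow> bool" where
  "linear_on J S \<longleftrightarrow> (\<forall>a\<in>J. S a \<in> J) \<and>
     (\<forall>a b. S (a + b) - (S a + S b) \<in> J) \<and> (\<forall>c a. S (psc c a) - psc c (S a) \<in> J)"

definition alg_hom_on :: "('w::monoid_add \<Rightarrow>\<^sub>0 'k::comm_ring_1) set
     \<Rightarrow> (('w \<Rightarrow>\<^sub>0 'k) \<Rightarrow> ('w \<Rightarrow>\<^sub>0 'k)) \<Rightarrow> bool" where
  "alg_hom_on J f \<longleftrightarrow> linear_on J f \<and> (\<forall>a b. f (a * b) - f a * f b \<in> J) \<and> f 1 - 1 \<in> J"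

definition hopf_like1 :: "('w::monoid_add \<Rightarrow>\<^sub>0 'k::comm_ring_1) set
     \<Rightarrow> (('w \<Rightarrow>\<^sub>0 'k) \<Rightarrow> ('w \<times> 'w \<Rightarrow>\<^sub>0 'k)) \<Rightarrow> (('w \<Rightarrow>\<^sub>0 'k) \<Rightarrow> 'k)
     \<Rightarrow> (('w \<Rightarrow>\<^sub>0 'k) \<Rightarrow> ('w \<Rightarrow>\<^sub>0 'k)) \<Rightarrow> bool" where
  "hopf_like1 J D E S \<longleftrightarrow> bialgebra_on J D E \<and> linear_on J S \<and>
     (\<forall>a. mSL S (D a) - csc (E (S a)) \<in> J) \<and> (\<forall>a. mSR S (D a) - csc (E (S a)) \<in> J)"

definition hopf_like2 :: "('w::monoid_add \<Rightarrow>\<^sub>0 'k::comm_ring_1) set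
     \<Rightarrow> (('w \<Rightarrow>\<^sub>0 'k) \<Rightarrow> ('w \<times> 'w \<Rightarrow>\<^sub>0 'k)) \<Rightarrow> (('w \<Rightarrow>\<^sub>0 'k) \<Rightarrow> 'k)
     \<Rightarrow> (('w \<Rightarrow>\<^sub>0 'k) \<Rightarrow> ('w \<Rightarrow>\<^sub>0 'k)) \<Rightarrow> (('w \<Rightarrow>\<^sub>0 'k) \<Rightarrow> ('w \<Rightarrow>\<^sub>0 'k)) \<Rightarrow> bool" where
  "hopf_like2 J D E sg S \<longleftrightarrow> bialgebra_on J D E \<and> alg_hom_on J sg \<and> linear_on J S \<and>
     (\<forall>a. sg (mSL S (D a)) - csc (E (S a)) \<in> J) \<and> (\<forall>a. mSR S (D a) - csc (E (S a)) \<in> J)"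

end

theory Submission
  imports Defs
begin

text \<open>\<Delta>, \<epsilon> and S are the (anti-)multiplicative linear extensions to the tensor algebra T(V) of
  their values on q and on the basis vectors x_j, so everything reduces to identities on
  generators. Each map sends the generators of the ideal J with H = T(V)/J into the appropriate
  ideal (J \<otimes> T + T \<otimes> J, J, resp. 0), hence descends to H. Coassociativity and the counit law
  are multiplicative and need only be checked on q and x_j. The antipode-like identities are
  not, but m(S \<otimes> id)\<Delta>(ab) = \<Sum> S(b_1) \<cdot> m(S \<otimes> id)\<Delta>(a) \<cdot> b_2, so they still propagate from generators
  to products as soon as m(S \<otimes> id)\<Delta>(a) is a scalar modulo J; for k \<noteq> 1 this holds on x only
  after applying \<sigma>.

  The remaining generator identities are noncommutative polynomial identities in q, x, y and
  \<langle>x, y\<rangle> with coefficients in \<int>[k, k\<inverse>]. They are certified by a normal form modulo J: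
  eliminate \<langle>x, y\<rangle> using the defining relation of H, delete every q after the first one in
  each word (q a q = q a), and check by evaluation that all coefficients cancel.\<close>

lemma poly_mapping_sum_single:
  "(p::'a \<Rightarrow>\<^sub>0 'b::comm_monoid_add) =
     (\<Sum>k\<in>Poly_Mapping.keys p. Poly_Mapping.single k (Poly_Mapping.lookup p k))"
proof -
  have *: "finite I \<Longrightarrow> Poly_Mapping.lookup (\<Sum>k\<in>I. Poly_Mapping.single k (Poly_Mapping.lookup p k)) j =
            (if j \<in> I then Poly_Mapping.lookup p j else 0)" for I j
    by (induction I rule: finite_induct) (auto simp: lookup_single lookup_add when_def lookup_sum)
  show ?thesis
    by (rule poly_mapping_eqI) (fastforce simp add: in_keys_iff *)
qed

lemma poly_mapping_induct[case_names zero single add]: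
  fixes p :: "'a \<Rightarrow>\<^sub>0 'b::comm_monoid_add"
  assumes "P 0" "\<And>k v. P (Poly_Mapping.single k v)" "\<And>a b. P a \<Longrightarrow> P b \<Longrightarrow> P (a+b)"
  shows "P p"
proof -
  have "\<And>I. finite I \<Longrightarrow> P (\<Sum>k\<in>I. Poly_Mapping.single k (Poly_Mapping.lookup p k))"
  proof -
    fix I :: "'a set" assume "finite I"
    then show "P (\<Sum>k\<in>I. Poly_Mapping.single k (Poly_Mapping.lookup p k))"
      by (induction I rule: finite_induct) (auto simp: assms)
  qed
  then show ?thesis by (subst poly_mapping_sum_single) simp
qed

lemma psc_eq_single_zero_mult: "psc c p = Poly_Mapping.single 0 c * p"
  by (simp add: psc_def mult_map_scale_conv_mult)

lemma lookup_psc: "Poly_Mapping.lookup (psc c p) k = c * Poly_Mapping.lookup p k"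
  by (simp add: psc_def Poly_Mapping.map.rep_eq when_def)

lemma single_zero_commute:
  fixes p :: "'m::monoid_add \<Rightarrow>\<^sub>0 'k::comm_semiring_1"
  shows "Poly_Mapping.single 0 c * p = p * Poly_Mapping.single 0 c"
proof (induction p rule: poly_mapping_induct)
  case (add a b) then show ?case by (simp add: distrib_left distrib_right)
qed (simp_all add: mult_single mult.commute)

lemma psc_add_right: "psc c (a + b) = psc c a + psc c b"
  for c :: "'k::comm_ring_1"
  by (rule poly_mapping_eqI) (simp add: lookup_psc lookup_add distrib_left)
lemma psc_add_left: "psc (c + d) a = psc c a + psc d a"
  for c :: "'k::comm_ring_1"
  by (rule poly_mapping_eqI) (simp add: lookup_psc lookup_add distrib_right)
lemma psc_mult_left: "psc c (a * b) = psc c a * b"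
  for a :: "'m::monoid_add \<Rightarrow>\<^sub>0 'k::comm_ring_1"
  by (simp add: psc_eq_single_zero_mult mult.assoc)
lemma psc_mult_right: "psc c (a * b) = a * psc c b"
  for a :: "'m::monoid_add \<Rightarrow>\<^sub>0 'k::comm_ring_1"
  by (simp add: psc_eq_single_zero_mult) (metis mult.assoc single_zero_commute)
lemma psc_psc: "psc c (psc d a) = psc (c * d) a"
  for c :: "'k::comm_ring_1"
  by (rule poly_mapping_eqI) (simp add: lookup_psc mult.assoc)
lemma psc_one[simp]: "psc 1 a = a"
  for a :: "'m \<Rightarrow>\<^sub>0 'k::comm_ring_1"
  by (rule poly_mapping_eqI) (simp add: lookup_psc)
lemma psc_zero_left[simp]: "psc 0 a = 0"
  for a :: "'m \<Rightarrow>\<^sub>0 'k::comm_ring_1"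
  by (rule poly_mapping_eqI) (simp add: lookup_psc)
lemma psc_zero_right[simp]: "psc c 0 = 0"
  for c :: "'k::comm_ring_1"
  by (rule poly_mapping_eqI) (simp add: lookup_psc)
lemma psc_uminus_right: "psc c (- a) = - psc c a"
  for c :: "'k::comm_ring_1"
  by (rule poly_mapping_eqI) (simp add: lookup_psc)
lemma psc_uminus_left: "psc (- c) a = - psc c a"
  for c :: "'k::comm_ring_1"
  by (rule poly_mapping_eqI) (simp add: lookup_psc)
lemma psc_diff_right: "psc c (a - b) = psc c a - psc c b"
  for c :: "'k::comm_ring_1"
  by (rule poly_mapping_eqI) (simp add: lookup_psc lookup_minus right_diff_distrib)
lemma psc_diff_left: "psc (c - d) a = psc c a - psc d a"
  for c :: "'k::comm_ring_1"
  by (rule poly_mapping_eqI) (simp add: lookup_psc lookup_minus left_diff_distrib)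
lemma psc_single: "psc c (Poly_Mapping.single u d) = Poly_Mapping.single u (c * d)"
  for c :: "'k::comm_ring_1"
  by (simp add: psc_def)
lemma psc_sum: "psc c (sum f A) = (\<Sum>x\<in>A. psc c (f x))"
  for c :: "'k::comm_ring_1"
  by (induction A rule: infinite_finite_induct) (simp_all add: psc_add_right)
lemma psc_one_eq_csc: "psc c (1::'m::monoid_add \<Rightarrow>\<^sub>0 'k::comm_ring_1) = csc c"
  by (simp add: psc_eq_single_zero_mult csc_def)

lemma psc_mult_both: "psc c x * psc d y = psc (c * d) (x * y)"
  for x :: "'m::monoid_add \<Rightarrow>\<^sub>0 'k::comm_ring_1"
  by (simp add: psc_mult_left[symmetric] psc_mult_right[symmetric] psc_psc mult.commute)

lemma linT_superset:
  fixes f :: "'w \<Rightarrow> 'm \<Rightarrow>\<^sub>0 'k::comm_ring_1"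
  assumes "finite S" "Poly_Mapping.keys a \<subseteq> S"
  shows "linT f a = (\<Sum>u\<in>S. psc (Poly_Mapping.lookup a u) (f u))"
  unfolding linT_def
  by (rule sum.mono_neutral_left) (use assms in \<open>auto simp: in_keys_iff\<close>)

lemma linT_add: "linT f (a + b) = linT f a + linT f b"
  for f :: "'w \<Rightarrow> 'm \<Rightarrow>\<^sub>0 'k::comm_ring_1"
proof -
  let ?S = "Poly_Mapping.keys a \<union> Poly_Mapping.keys b"
  have k: "Poly_Mapping.keys (a+b) \<subseteq> ?S" by (rule keys_add)
  show ?thesis
    by (simp add: linT_superset[OF _ k] linT_superset[of ?S a] linT_superset[of ?S b]
        lookup_add psc_add_left sum.distrib)
qed

lemma linT_zero[simp]: "linT f 0 = 0" by (simp add: linT_def)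

lemma linT_single: "linT f (Poly_Mapping.single u c) = psc c (f u)"
  for f :: "'w \<Rightarrow> 'm \<Rightarrow>\<^sub>0 'k::comm_ring_1"
  by (simp add: linT_def)

lemma linT_psc: "linT f (psc c a) = psc c (linT f a)"
  for f :: "'w \<Rightarrow> 'm \<Rightarrow>\<^sub>0 'k::comm_ring_1"
  by (induction a rule: poly_mapping_induct) (simp_all add: linT_add psc_add_right psc_single linT_single psc_psc)

lemma linT_uminus: "linT f (- a) = - linT f a"
  for f :: "'w \<Rightarrow> 'm \<Rightarrow>\<^sub>0 'k::comm_ring_1"
  by (metis add_eq_0_iff linT_add linT_zero add.right_inverse)

lemma linT_diff: "linT f (a - b) = linT f a - linT f b"
  for f :: "'w \<Rightarrow> 'm \<Rightarrow>\<^sub>0 'k::comm_ring_1"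
  by (metis diff_conv_add_uminus linT_add linT_uminus)

lemma linT_mult:
  fixes f :: "'w::monoid_add \<Rightarrow> 'm::monoid_add \<Rightarrow>\<^sub>0 'k::comm_ring_1"
  assumes "\<And>u v. f (u + v) = f u * f v"
  shows "linT f (a * b) = linT f a * linT f b"
proof (induction a rule: poly_mapping_induct)
  case (single u c)
  show ?case
  proof (induction b rule: poly_mapping_induct)
    case (single v d)
    then show ?case by (simp add: mult_single linT_single assms psc_mult_both mult.commute)
  next
    case (add x y) then show ?case by (simp add: distrib_left linT_add)
  qed simp
next
  case (add x y) then show ?case by (simp add: distrib_right linT_add)
qed simp

lemma linT_mult_anti:
  fixes f :: "'w::monoid_add \<Rightarrow> 'm::monoid_add \<Rightarrow>\<^sub>0 'k::comm_ring_1"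
  assumes "\<And>u v. f (u + v) = f v * f u"
  shows "linT f (a * b) = linT f b * linT f a"
proof (induction a rule: poly_mapping_induct)
  case (single u c)
  show ?case
  proof (induction b rule: poly_mapping_induct)
    case (single v d)
    then show ?case by (simp add: mult_single linT_single assms psc_mult_both mult.commute)
  next
    case (add x y) then show ?case by (simp add: distrib_left distrib_right linT_add)
  qed simp
next
  case (add x y) then show ?case by (simp add: distrib_right distrib_left linT_add)
qed simp

lemma linT_one:
  fixes f :: "'w::monoid_add \<Rightarrow> 'm::monoid_add \<Rightarrow>\<^sub>0 'k::comm_ring_1"
  assumes "f 0 = 1" shows "linT f 1 = 1"
proof -
  have "linT f 1 = psc 1 (f 0)" using linT_single[of f 0 1] by simp
  then show ?thesis by (simp add: assms)
qed

lemma linK_superset: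
  assumes "finite S" "Poly_Mapping.keys a \<subseteq> S"
  shows "linK f a = (\<Sum>u\<in>S. Poly_Mapping.lookup a u * f u)"
  unfolding linK_def
  by (rule sum.mono_neutral_left) (use assms in \<open>auto simp: in_keys_iff\<close>)

lemma linK_add: "linK f (a + b) = linK f a + linK f b"
  for f :: "'w \<Rightarrow> 'k::comm_ring_1"
proof -
  let ?S = "Poly_Mapping.keys a \<union> Poly_Mapping.keys b"
  have k: "Poly_Mapping.keys (a+b) \<subseteq> ?S" by (rule keys_add)
  show ?thesis
    by (simp add: linK_superset[OF _ k] linK_superset[of ?S a] linK_superset[of ?S b]
        lookup_add distrib_right sum.distrib)
qed

lemma linK_zero[simp]: "linK f 0 = 0" by (simp add: linK_def)

lemma linK_single: "linK f (Poly_Mapping.single u c) = c * f u"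
  for f :: "'w \<Rightarrow> 'k::comm_ring_1"
  by (simp add: linK_def)

lemma linK_psc: "linK f (psc c a) = c * linK f a"
  for f :: "'w::monoid_add \<Rightarrow> 'k::comm_ring_1"
  by (induction a rule: poly_mapping_induct) (simp_all add: linK_add psc_add_right psc_single linK_single distrib_left)

lemma linK_mult:
  fixes f :: "'w::monoid_add \<Rightarrow> 'k::comm_ring_1"
  assumes "\<And>u v. f (u + v) = f u * f v"
  shows "linK f (a * b) = linK f a * linK f b"
proof (induction a rule: poly_mapping_induct)
  case (single u c)
  show ?case
  proof (induction b rule: poly_mapping_induct)
    case (single v d)
    then show ?case by (simp add: mult_single linK_single assms mult_ac)
  next
    case (add x y) then show ?case by (simp add: distrib_left linK_add)
  qed simp
next
  case (add x y) then show ?case by (simp add: distrib_right linK_add)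
qed simp

lemma linK_one:
  fixes f :: "'w::monoid_add \<Rightarrow> 'k::comm_ring_1"
  assumes "f 0 = 1" shows "linK f 1 = 1"
proof -
  have "linK f 1 = 1 * (f 0)" using linK_single[of f 0 1] by simp
  then show ?thesis by (simp add: assms)
qed

lemma linT_fadd: "linT (\<lambda>u. f u + g u) a = linT f a + linT g a"
  for f :: "'w \<Rightarrow> 'm \<Rightarrow>\<^sub>0 'k::comm_ring_1"
  by (simp add: linT_def psc_add_right sum.distrib)
lemma linT_fpsc: "linT (\<lambda>u. psc c (f u)) a = psc c (linT f a)"
  for f :: "'w \<Rightarrow> 'm \<Rightarrow>\<^sub>0 'k::comm_ring_1"
  by (simp add: linT_def psc_sum psc_psc mult_ac mono_def psc_single)
lemma linT_fzero: "linT (\<lambda>u. 0) a = (0 :: 'm \<Rightarrow>\<^sub>0 'k::comm_ring_1)"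
  by (simp add: linT_def)
lemma linT_fneg: "linT (\<lambda>u. - f u) a = - linT f a"
  for f :: "'w \<Rightarrow> 'm \<Rightarrow>\<^sub>0 'k::comm_ring_1"
  by (simp add: linT_def psc_uminus_right sum_negf)
lemma linT_fdiff: "linT (\<lambda>u. f u - g u) a = linT f a - linT g a"
  for f :: "'w \<Rightarrow> 'm \<Rightarrow>\<^sub>0 'k::comm_ring_1"
  by (simp add: linT_def psc_diff_right sum_subtractf)
lemma linT_cong: "(\<And>u. f u = g u) \<Longrightarrow> linT f a = linT g a"
  by (simp add: linT_def)

lemma linT_linear:
  fixes \<phi> :: "('m \<Rightarrow>\<^sub>0 'k::comm_ring_1) \<Rightarrow> ('n \<Rightarrow>\<^sub>0 'k)"
  assumes add: "\<And>a b. \<phi> (a + b) = \<phi> a + \<phi> b" and sc: "\<And>c a. \<phi> (psc c a) = psc c (\<phi> a)"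
  shows "\<phi> (linT f x) = linT (\<lambda>u. \<phi> (f u)) x"
proof -
  have z: "\<phi> 0 = 0" using sc[of 0 0] by simp
  have sm: "\<phi> (sum g A) = (\<Sum>u\<in>A. \<phi> (g u))" for g and A
    by (induction A rule: infinite_finite_induct) (simp_all add: z add)
  show ?thesis by (simp add: linT_def sc sm)
qed

lemma linT_mono_id: "linT mono a = (a :: 'm \<Rightarrow>\<^sub>0 'k::comm_ring_1)"
  by (subst (2) poly_mapping_sum_single) (simp add: linT_def mono_def psc_single)

lemma linT_mult_right: "linT f a * c = linT (\<lambda>u. f u * c) a"
  for f :: "'w \<Rightarrow> 'm::monoid_add \<Rightarrow>\<^sub>0 'k::comm_ring_1"
  by (rule linT_linear) (simp_all add: distrib_right psc_mult_left)
lemma linT_mult_left: "c * linT f a = linT (\<lambda>u. c * f u) a"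
  for f :: "'w \<Rightarrow> 'm::monoid_add \<Rightarrow>\<^sub>0 'k::comm_ring_1"
  by (rule linT_linear) (simp_all add: distrib_left psc_mult_right)

lemma linear_via_linT:
  fixes S :: "('m \<Rightarrow>\<^sub>0 'k::comm_ring_1) \<Rightarrow> ('n \<Rightarrow>\<^sub>0 'k)"
  assumes "\<And>a b. S (a + b) = S a + S b" "\<And>c a. S (psc c a) = psc c (S a)"
  shows "S a = linT (\<lambda>u. S (mono u)) a"
  using linT_linear[of S mono a, OF assms] by (simp add: linT_mono_id)

lemma wrd_plus: "Wrd u + Wrd v = Wrd (u @ v)" by (simp add: plus_wrd_def)
lemma wrd_zero: "0 = Wrd []" by (simp add: zero_wrd_def)

lemma hext_plus: "hext f (u + v) = hext f u * hext f v"
  by (simp add: hext_def plus_wrd_def)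
lemma hext_zero: "hext f 0 = 1" by (simp add: hext_def zero_wrd_def)
lemma ahext_plus: "ahext f (u + v) = ahext f v * ahext f u"
  by (simp add: ahext_def plus_wrd_def)
lemma ahext_zero: "ahext f 0 = 1" by (simp add: ahext_def zero_wrd_def)

lemma mono_mult: "mono u * mono v = (mono (u + v) :: 'w::monoid_add \<Rightarrow>\<^sub>0 'k::comm_ring_1)"
  by (simp add: mono_def mult_single)

lemma mono_zero: "mono 0 = (1::'w::monoid_add \<Rightarrow>\<^sub>0 'k::comm_ring_1)"
  by (simp add: mono_def)

lemma linT_mono: "linT f (mono u) = f u"
  for f :: "'w \<Rightarrow> 'm \<Rightarrow>\<^sub>0 'k::comm_ring_1"
  by (simp add: mono_def linT_single)
lemma linK_mono: "linK f (mono u) = f u"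
  for f :: "'w \<Rightarrow> 'k::comm_ring_1"
  by (simp add: mono_def linK_single)

lemma single_psc_mono: "Poly_Mapping.single u c = psc c (mono u)"
  for c :: "'k::comm_ring_1"
  by (simp add: mono_def psc_single)

lemma mono_cons: "mono (Wrd (v # w)) = gen v * (mono (Wrd w) :: 'v wrd \<Rightarrow>\<^sub>0 'k::comm_ring_1)"
  by (simp add: gen_def mono_mult wrd_plus)
lemma mono_nil: "mono (Wrd []) = (1 :: 'v wrd \<Rightarrow>\<^sub>0 'k::comm_ring_1)"
  by (simp add: mono_zero[symmetric] wrd_zero)

lemma tens_induct[case_names zero add psc one gen]:
  fixes a :: "'v wrd \<Rightarrow>\<^sub>0 'k::comm_ring_1"
  assumes lin: "P 0" "\<And>a b. P a \<Longrightarrow> P b \<Longrightarrow> P (a + b)" "\<And>c a. P a \<Longrightarrow> P (psc c a)"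
    and one: "P 1"
    and gen: "\<And>v m. P m \<Longrightarrow> P (gen v * m)"
  shows "P a"
proof -
  have w: "P (mono (Wrd w))" for w
    by (induction w) (simp_all add: mono_nil one mono_cons gen)
  have m: "P (mono u)" for u by (cases u) (simp add: w)
  show ?thesis
    by (induction a rule: poly_mapping_induct) (simp_all add: lin single_psc_mono m)
qed

lemma sum_single_eq_linT:
  "(\<Sum>v\<in>Poly_Mapping.keys b. Poly_Mapping.single (h v) (c * Poly_Mapping.lookup b v))
   = psc c (linT (\<lambda>v. mono (h v)) b)"
  for c :: "'k::comm_ring_1"
  by (simp add: linT_def psc_sum psc_psc mono_def psc_single mult.commute)

lemma tns_alt: "tns a b = linT (\<lambda>u. linT (\<lambda>v. mono (u, v)) b) (a :: 'a \<Rightarrow>\<^sub>0 'k::comm_ring_1)"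
  unfolding tns_def linT_def
  by (simp add: sum_single_eq_linT[of "\<lambda>v. (_, v)", unfolded linT_def])

lemma tns3_alt: "tns3 a b c = linT (\<lambda>u. linT (\<lambda>v. linT (\<lambda>w. mono (u, v, w)) c) b) (a :: 'a \<Rightarrow>\<^sub>0 'k::comm_ring_1)"
  unfolding tns3_def linT_def
  by (simp add: psc_sum psc_psc mono_def psc_single mult.assoc)

lemma tns_add_left: "tns (a + a') b = tns a b + tns a' b"
  by (simp add: tns_alt linT_add)
lemma tns_add_right: "tns a (b + b') = tns a b + tns a b'"
  by (simp add: tns_alt linT_add linT_fadd)
lemma tns_psc_left: "tns (psc c a) b = psc c (tns a b)"
  by (simp add: tns_alt linT_psc)
lemma tns_psc_right: "tns a (psc c b) = psc c (tns a b)"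
  by (simp add: tns_alt linT_psc linT_fpsc)
lemma tns_zero_left[simp]: "tns 0 b = 0" by (simp add: tns_alt)
lemma tns_zero_right[simp]: "tns a 0 = 0" by (simp add: tns_alt linT_fzero)
lemma tns_uminus_left: "tns (- a) b = - tns a b"
  by (simp add: tns_alt linT_uminus)
lemma tns_uminus_right: "tns a (- b) = - tns a b"
  by (simp add: tns_alt linT_uminus linT_fneg)
lemma tns_diff_left: "tns (a - a') b = tns a b - tns a' b"
  by (simp add: tns_alt linT_diff)
lemma tns_diff_right: "tns a (b - b') = tns a b - tns a b'"
  by (simp add: tns_alt linT_diff linT_fdiff)
lemma tns_single: "tns (Poly_Mapping.single u c) (Poly_Mapping.single v d) = Poly_Mapping.single (u, v) (c * d)"
  by (simp add: tns_alt linT_single linT_fpsc psc_psc mono_def psc_single mult.commute)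
lemma tns_mono: "tns (mono u) (mono v) = (mono (u, v) :: _ \<Rightarrow>\<^sub>0 'k::comm_ring_1)"
  by (simp add: mono_def tns_single)

lemmas tns_lin = tns_add_left tns_add_right tns_psc_left tns_psc_right tns_uminus_left tns_uminus_right
  tns_diff_left tns_diff_right

lemma tns_mult: "tns a b * tns c d = tns (a * c) (b * d)"
  for a :: "'m::monoid_add \<Rightarrow>\<^sub>0 'k::comm_ring_1"
proof (induction a rule: poly_mapping_induct)
  case (single u1 x1)
  show ?case
  proof (induction b rule: poly_mapping_induct)
    case (single v1 y1)
    show ?case
    proof (induction c rule: poly_mapping_induct)
      case (single u2 x2)
      show ?case
      proof (induction d rule: poly_mapping_induct)
        case (single v2 y2)
        show ?case by (simp add: tns_single mult_single mult_ac)
      qed (simp_all add: tns_lin distrib_left)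
    qed (simp_all add: tns_lin distrib_left distrib_right)
  qed (simp_all add: tns_lin distrib_left distrib_right)
qed (simp_all add: tns_lin distrib_left distrib_right)

lemma tns_one: "tns 1 1 = (1 :: ('m::monoid_add \<times> 'm) \<Rightarrow>\<^sub>0 'k::comm_ring_1)"
proof -
  have "tns (1::'m \<Rightarrow>\<^sub>0 'k) 1 = tns (Poly_Mapping.single 0 1) (Poly_Mapping.single 0 1)" by simp
  also have "\<dots> = Poly_Mapping.single (0, 0) 1" by (simp only: tns_single) simp
  finally show ?thesis by (simp add: zero_prod_def[symmetric])
qed

lemma tns3_add1: "tns3 (a + a') b c = tns3 a b c + tns3 a' b c"
  by (simp add: tns3_alt linT_add)
lemma tns3_add2: "tns3 a (b + b') c = tns3 a b c + tns3 a b' c"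
  by (simp add: tns3_alt linT_add linT_fadd)
lemma tns3_add3: "tns3 a b (c + c') = tns3 a b c + tns3 a b c'"
  by (simp add: tns3_alt linT_add linT_fadd)
lemma tns3_psc1: "tns3 (psc x a) b c = psc x (tns3 a b c)"
  by (simp add: tns3_alt linT_psc)
lemma tns3_psc2: "tns3 a (psc x b) c = psc x (tns3 a b c)"
  by (simp add: tns3_alt linT_psc linT_fpsc)
lemma tns3_psc3: "tns3 a b (psc x c) = psc x (tns3 a b c)"
  by (simp add: tns3_alt linT_psc linT_fpsc)
lemma tns3_zero1[simp]: "tns3 0 b c = 0" by (simp add: tns3_alt)
lemma tns3_zero2[simp]: "tns3 a 0 c = 0" by (simp add: tns3_alt linT_fzero)
lemma tns3_zero3[simp]: "tns3 a b 0 = 0" by (simp add: tns3_alt linT_fzero)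
lemma tns3_diff1: "tns3 (a - a') b c = tns3 a b c - tns3 a' b c"
  by (simp add: tns3_alt linT_diff)
lemma tns3_diff2: "tns3 a (b - b') c = tns3 a b c - tns3 a b' c"
  by (simp add: tns3_alt linT_diff linT_fdiff)
lemma tns3_diff3: "tns3 a b (c - c') = tns3 a b c - tns3 a b c'"
  by (simp add: tns3_alt linT_diff linT_fdiff)

lemmas tns3_lin = tns3_add1 tns3_add2 tns3_add3 tns3_psc1 tns3_psc2 tns3_psc3
   tns3_diff1 tns3_diff2 tns3_diff3

definition tnsL :: "('m \<times> 'm \<Rightarrow>\<^sub>0 'k::comm_ring_1) \<Rightarrow> ('m \<Rightarrow>\<^sub>0 'k) \<Rightarrow> ('m \<times> 'm \<times> 'm \<Rightarrow>\<^sub>0 'k)" where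
  "tnsL Y c = linT (\<lambda>r. linT (\<lambda>w. mono (fst r, snd r, w)) c) Y"
definition tnsR :: "('m \<Rightarrow>\<^sub>0 'k::comm_ring_1) \<Rightarrow> ('m \<times> 'm \<Rightarrow>\<^sub>0 'k) \<Rightarrow> ('m \<times> 'm \<times> 'm \<Rightarrow>\<^sub>0 'k)" where
  "tnsR a Y = linT (\<lambda>u. linT (\<lambda>r. mono (u, fst r, snd r)) Y) a"

lemma tnsL_add1: "tnsL (Y + Y') c = tnsL Y c + tnsL Y' c" by (simp add: tnsL_def linT_add)
lemma tnsL_add2: "tnsL Y (c + c') = tnsL Y c + tnsL Y c'" by (simp add: tnsL_def linT_add linT_fadd)
lemma tnsL_psc1: "tnsL (psc x Y) c = psc x (tnsL Y c)" by (simp add: tnsL_def linT_psc)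
lemma tnsL_psc2: "tnsL Y (psc x c) = psc x (tnsL Y c)" by (simp add: tnsL_def linT_psc linT_fpsc)
lemma tnsL_zero1[simp]: "tnsL 0 c = 0" by (simp add: tnsL_def)
lemma tnsL_zero2[simp]: "tnsL Y 0 = 0" by (simp add: tnsL_def linT_fzero)
lemma tnsL_single: "tnsL (Poly_Mapping.single r x) (Poly_Mapping.single w z) = Poly_Mapping.single (fst r, snd r, w) (x * z)"
  by (simp add: tnsL_def linT_single psc_psc mono_def psc_single mult.commute)
lemma tnsR_add1: "tnsR (a + a') Y = tnsR a Y + tnsR a' Y" by (simp add: tnsR_def linT_add)
lemma tnsR_add2: "tnsR a (Y + Y') = tnsR a Y + tnsR a Y'" by (simp add: tnsR_def linT_add linT_fadd)
lemma tnsR_psc1: "tnsR (psc x a) Y = psc x (tnsR a Y)" by (simp add: tnsR_def linT_psc)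
lemma tnsR_psc2: "tnsR a (psc x Y) = psc x (tnsR a Y)" by (simp add: tnsR_def linT_psc linT_fpsc)
lemma tnsR_zero1[simp]: "tnsR 0 Y = 0" by (simp add: tnsR_def)
lemma tnsR_zero2[simp]: "tnsR a 0 = 0" by (simp add: tnsR_def linT_fzero)
lemma tnsR_single: "tnsR (Poly_Mapping.single u x) (Poly_Mapping.single r z) = Poly_Mapping.single (u, fst r, snd r) (x * z)"
  by (simp add: tnsR_def linT_single psc_psc mono_def psc_single mult.commute)

lemma tnsL_tns: "tnsL (tns a b) c = tns3 a b c"
proof -
  have "tnsL (tns a b) c = linT (\<lambda>u. tnsL (linT (\<lambda>v. mono (u, v)) b) c) a"
    unfolding tns_alt by (rule linT_linear) (simp_all add: tnsL_add1 tnsL_psc1)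
  also have "\<dots> = linT (\<lambda>u. linT (\<lambda>v. tnsL (mono (u, v)) c) b) a"
    by (rule linT_cong, rule linT_linear) (simp_all add: tnsL_add1 tnsL_psc1)
  also have "\<dots> = tns3 a b c"
    by (simp add: tns3_alt tnsL_def linT_mono)
  finally show ?thesis .
qed

lemma tnsR_tns: "tnsR a (tns b c) = tns3 a b c"
proof -
  have "tnsR a (tns b c) = linT (\<lambda>u. linT (\<lambda>r. mono (u, fst r, snd r)) (tns b c)) a"
    by (simp add: tnsR_def)
  also have "\<dots> = linT (\<lambda>u. linT (\<lambda>v. linT (\<lambda>w. mono (u, v, w)) c) b) a"
  proof (rule linT_cong)
    fix u
    have "linT (\<lambda>r. mono (u, fst r, snd r)) (tns b c)
       = linT (\<lambda>v. linT (\<lambda>r. mono (u, fst r, snd r)) (linT (\<lambda>w. mono (v, w)) c)) b"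
      unfolding tns_alt by (rule linT_linear) (simp_all add: linT_add linT_psc)
    also have "\<dots> = linT (\<lambda>v. linT (\<lambda>w. mono (u, v, w)) c) b"
      by (rule linT_cong, subst linT_linear[of "linT (\<lambda>r. mono (u, fst r, snd r))"])
         (simp_all add: linT_add linT_psc linT_mono)
    finally show "linT (\<lambda>r. mono (u, fst r, snd r)) (tns b c) = linT (\<lambda>v. linT (\<lambda>w. mono (u, v, w)) c) b" .
  qed
  also have "\<dots> = tns3 a b c" by (simp add: tns3_alt)
  finally show ?thesis .
qed

lemmas tnsL_lin = tnsL_add1 tnsL_add2 tnsL_psc1 tnsL_psc2
lemmas tnsR_lin = tnsR_add1 tnsR_add2 tnsR_psc1 tnsR_psc2

lemma tnsL_mult: "tnsL Y c * tnsL Y' c' = tnsL (Y * Y') (c * c')"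
  for c :: "'m::monoid_add \<Rightarrow>\<^sub>0 'k::comm_ring_1"
proof (induction Y rule: poly_mapping_induct)
  case (single r x)
  show ?case
  proof (induction c rule: poly_mapping_induct)
    case (single w z)
    show ?case
    proof (induction Y' rule: poly_mapping_induct)
      case (single r' x')
      show ?case
      proof (induction c' rule: poly_mapping_induct)
        case (single w' z')
        show ?case by (simp add: tnsL_single mult_single mult_ac)
      qed (simp_all add: tnsL_lin distrib_left)
    qed (simp_all add: tnsL_lin distrib_left distrib_right)
  qed (simp_all add: tnsL_lin distrib_left distrib_right)
qed (simp_all add: tnsL_lin distrib_left distrib_right)

lemma tnsR_mult: "tnsR a Y * tnsR a' Y' = tnsR (a * a') (Y * Y')"
  for a :: "'m::monoid_add \<Rightarrow>\<^sub>0 'k::comm_ring_1"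
proof (induction a rule: poly_mapping_induct)
  case (single r x)
  show ?case
  proof (induction Y rule: poly_mapping_induct)
    case (single w z)
    show ?case
    proof (induction a' rule: poly_mapping_induct)
      case (single r' x')
      show ?case
      proof (induction Y' rule: poly_mapping_induct)
        case (single w' z')
        show ?case by (cases w; cases w') (simp add: tnsR_single mult_single mult_ac)
      qed (simp_all add: tnsR_lin distrib_left)
    qed (simp_all add: tnsR_lin distrib_left distrib_right)
  qed (simp_all add: tnsR_lin distrib_left distrib_right)
qed (simp_all add: tnsR_lin distrib_left distrib_right)

lemma tnsL_one: "tnsL 1 1 = (1 :: 'm::monoid_add \<times> 'm \<times> 'm \<Rightarrow>\<^sub>0 'k::comm_ring_1)"
proof -
  have "tnsL (1::'m \<times> 'm \<Rightarrow>\<^sub>0 'k) (1::'m \<Rightarrow>\<^sub>0 'k) = tnsL (Poly_Mapping.single 0 1) (Poly_Mapping.single 0 1)" by simp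
  also have "\<dots> = Poly_Mapping.single (0, 0, 0) 1" by (simp only: tnsL_single) simp
  finally show ?thesis by (simp add: zero_prod_def[symmetric])
qed
lemma tnsR_one: "tnsR 1 1 = (1 :: 'm::monoid_add \<times> 'm \<times> 'm \<Rightarrow>\<^sub>0 'k::comm_ring_1)"
proof -
  have "tnsR (1::'m \<Rightarrow>\<^sub>0 'k) (1::'m \<times> 'm \<Rightarrow>\<^sub>0 'k) = tnsR (Poly_Mapping.single 0 1) (Poly_Mapping.single 0 1)" by simp
  also have "\<dots> = Poly_Mapping.single (0, 0, 0) 1" by (simp only: tnsR_single) simp
  finally show ?thesis by (simp add: zero_prod_def[symmetric])
qed

definition is_ideal :: "'a::ring_1 set \<Rightarrow> bool" where
  "is_ideal I \<longleftrightarrow> 0 \<in> I \<and> (\<forall>a\<in>I. \<forall>b\<in>I. a + b \<in> I) \<and> (\<forall>a\<in>I. \<forall>r s. r * a * s \<in> I)"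

lemma is_ideal_ideal_of: "is_ideal (ideal_of G)"
  unfolding is_ideal_def ideal_of_def by blast
lemma generator_in_ideal_of: "g \<in> G \<Longrightarrow> g \<in> ideal_of G"
  unfolding ideal_of_def by blast
lemma ideal_of_least: "is_ideal I \<Longrightarrow> G \<subseteq> I \<Longrightarrow> ideal_of G \<subseteq> I"
  unfolding ideal_of_def is_ideal_def by blast

context fixes I :: "'a::ring_1 set" assumes I: "is_ideal I"
begin
lemma ideal_zero: "0 \<in> I" using I by (simp add: is_ideal_def)
lemma ideal_add: "a \<in> I \<Longrightarrow> b \<in> I \<Longrightarrow> a + b \<in> I" using I by (simp add: is_ideal_def)
lemma ideal_mult_both: "a \<in> I \<Longrightarrow> r * a * s \<in> I" using I by (simp add: is_ideal_def)
lemma ideal_mult_left: "a \<in> I \<Longrightarrow> r * a \<in> I" using ideal_mult_both[of a r 1] by simp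
lemma ideal_mult_right: "a \<in> I \<Longrightarrow> a * s \<in> I" using ideal_mult_both[of a 1 s] by simp
lemma ideal_uminus: "a \<in> I \<Longrightarrow> - a \<in> I" using ideal_mult_both[of a "-1" 1] by simp
lemma ideal_diff: "a \<in> I \<Longrightarrow> b \<in> I \<Longrightarrow> a - b \<in> I" using ideal_add[of a "-b"] ideal_uminus by simp
lemma ideal_sum: "(\<And>x. x \<in> A \<Longrightarrow> f x \<in> I) \<Longrightarrow> sum f A \<in> I"
  by (induction A rule: infinite_finite_induct) (auto simp: ideal_zero ideal_add)
lemma ideal_cong_trans: "a - b \<in> I \<Longrightarrow> b - c \<in> I \<Longrightarrow> a - c \<in> I"
  using ideal_add[of "a - b" "b - c"] by simp
lemma ideal_cong_sym: "a - b \<in> I \<Longrightarrow> b - a \<in> I"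
  using ideal_uminus[of "a - b"] by simp
lemma ideal_cong_refl: "a - a \<in> I" by (simp add: ideal_zero)
lemma ideal_cong_add: "a - b \<in> I \<Longrightarrow> c - d \<in> I \<Longrightarrow> (a + c) - (b + d) \<in> I"
  using ideal_add[of "a - b" "c - d"] by (simp add: algebra_simps)
lemma ideal_cong_mult: "a - b \<in> I \<Longrightarrow> c - d \<in> I \<Longrightarrow> a * c - b * d \<in> I"
proof -
  assume "a - b \<in> I" "c - d \<in> I"
  then have "(a - b) * c + b * (c - d) \<in> I" by (simp add: ideal_add ideal_mult_left ideal_mult_right)
  then show ?thesis by (simp add: algebra_simps)
qed
lemma ideal_cong_mult_both: "a - b \<in> I \<Longrightarrow> r * a * s - r * b * s \<in> I"
  using ideal_mult_both[of "a - b" r s] by (simp add: algebra_simps)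
end

lemma ideal_psc: "is_ideal I \<Longrightarrow> a \<in> I \<Longrightarrow> psc c a \<in> I"
  for a :: "'m::monoid_add \<Rightarrow>\<^sub>0 'k::comm_ring_1"
  using ideal_mult_left[of I a "Poly_Mapping.single 0 c"] by (simp add: psc_eq_single_zero_mult)
lemma ideal_cong_psc: "is_ideal I \<Longrightarrow> a - b \<in> I \<Longrightarrow> psc c a - psc c b \<in> I"
  for a :: "'m::monoid_add \<Rightarrow>\<^sub>0 'k::comm_ring_1"
  using ideal_psc[of I "a - b" c] by (simp add: psc_diff_right)

lemma hom_ideal_of_into:
  assumes "is_ideal I'" and add: "\<And>a b. \<phi> (a + b) = \<phi> a + \<phi> b" and z: "\<phi> 0 = 0"
    and mul: "\<And>a b. \<phi> (a * b) = \<phi> a * \<phi> b"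
    and g: "\<And>g. g \<in> G \<Longrightarrow> \<phi> g \<in> I'"
    and a: "a \<in> ideal_of G"
  shows "\<phi> a \<in> I'"
proof -
  have "is_ideal {a. \<phi> a \<in> I'}"
    using assms(1) unfolding is_ideal_def by (auto simp: add z mul)
  with g have "ideal_of G \<subseteq> {a. \<phi> a \<in> I'}" by (intro ideal_of_least) auto
  with a show ?thesis by auto
qed

lemma antihom_ideal_of_into:
  assumes "is_ideal I'" and add: "\<And>a b. \<phi> (a + b) = \<phi> a + \<phi> b" and z: "\<phi> 0 = 0"
    and mul: "\<And>a b. \<phi> (a * b) = \<phi> b * \<phi> a"
    and g: "\<And>g. g \<in> G \<Longrightarrow> \<phi> g \<in> I'"
    and a: "a \<in> ideal_of G"
  shows "\<phi> a \<in> I'"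
proof -
  have "is_ideal {a. \<phi> a \<in> I'}"
    using assms(1) unfolding is_ideal_def by (auto simp: add z mul mult.assoc)
  with g have "ideal_of G \<subseteq> {a. \<phi> a \<in> I'}" by (intro ideal_of_least) auto
  with a show ?thesis by auto
qed

lemma character_ideal_of_zero:
  fixes E :: "'a::ring_1 \<Rightarrow> 'k::comm_ring_1"
  assumes add: "\<And>a b. E (a + b) = E a + E b" and z: "E 0 = 0"
    and mul: "\<And>a b. E (a * b) = E a * E b"
    and g: "\<And>g. g \<in> G \<Longrightarrow> E g = 0"
    and a: "a \<in> ideal_of G"
  shows "E a = 0"
proof -
  have "is_ideal {a. E a = 0}"
    unfolding is_ideal_def by (auto simp: add z mul)
  with g have "ideal_of G \<subseteq> {a. E a = 0}" by (intro ideal_of_least) auto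
  with a show ?thesis by auto
qed

lemma linT_in_ideal: "is_ideal J \<Longrightarrow> (\<And>u. f u \<in> J) \<Longrightarrow> linT f a \<in> J"
  for f :: "'w \<Rightarrow> 'm::monoid_add \<Rightarrow>\<^sub>0 'k::comm_ring_1"
  unfolding linT_def by (intro ideal_sum ideal_psc) auto

lemma is_ideal_J2: "is_ideal (J2 J)" by (simp add: J2_def is_ideal_ideal_of)
lemma is_ideal_J3: "is_ideal (J3 J)" by (simp add: J3_def is_ideal_ideal_of)

lemma tns_left_in_J2: "j \<in> J \<Longrightarrow> tns j a \<in> J2 J"
  unfolding J2_def by (rule generator_in_ideal_of) blast
lemma tns_right_in_J2: "j \<in> J \<Longrightarrow> tns a j \<in> J2 J"
  unfolding J2_def by (rule generator_in_ideal_of) blast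

lemma tns_cong_J2:
  fixes a :: "'w::monoid_add \<Rightarrow>\<^sub>0 'k::comm_ring_1"
  assumes "a - a' \<in> J" "b - b' \<in> J"
  shows "tns a b - tns a' b' \<in> J2 J"
proof -
  have "tns (a - a') b + tns a' (b - b') \<in> J2 J"
    using assms by (intro ideal_add[OF is_ideal_J2] tns_left_in_J2 tns_right_in_J2)
  then show ?thesis by (simp add: tns_lin)
qed

lemma tns3_in_J3_1: "j \<in> J \<Longrightarrow> tns3 j a b \<in> J3 J"
  unfolding J3_def by (rule generator_in_ideal_of) blast
lemma tns3_in_J3_2: "j \<in> J \<Longrightarrow> tns3 a j b \<in> J3 J"
  unfolding J3_def by (rule generator_in_ideal_of) blast
lemma tns3_in_J3_3: "j \<in> J \<Longrightarrow> tns3 a b j \<in> J3 J"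
  unfolding J3_def by (rule generator_in_ideal_of) blast

lemma tns3_cong_J3:
  fixes a :: "'w::monoid_add \<Rightarrow>\<^sub>0 'k::comm_ring_1"
  assumes "a - a' \<in> J" "b - b' \<in> J" "c - c' \<in> J"
  shows "tns3 a b c - tns3 a' b' c' \<in> J3 J"
proof -
  have "tns3 (a - a') b c + tns3 a' (b - b') c + tns3 a' b' (c - c') \<in> J3 J"
    using assms by (intro ideal_add[OF is_ideal_J3] tns3_in_J3_1 tns3_in_J3_2 tns3_in_J3_3)
  then show ?thesis by (simp add: tns3_lin)
qed

lemma csc_add: "csc (a + b) = csc a + (csc b :: 'm::monoid_add \<Rightarrow>\<^sub>0 'k::comm_ring_1)"
  by (simp add: csc_def single_add)
lemma csc_zero: "csc 0 = (0 :: 'm::monoid_add \<Rightarrow>\<^sub>0 'k::comm_ring_1)" by (simp add: csc_def)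
lemma csc_one: "csc 1 = (1 :: 'm::monoid_add \<Rightarrow>\<^sub>0 'k::comm_ring_1)" by (simp add: csc_def)
lemma csc_mult: "csc (a * b) = psc a (csc b :: 'm::monoid_add \<Rightarrow>\<^sub>0 'k::comm_ring_1)"
  by (simp add: csc_def psc_single)

context
  fixes S :: "('m::monoid_add \<Rightarrow>\<^sub>0 'k::comm_ring_1) \<Rightarrow> ('m \<Rightarrow>\<^sub>0 'k)"
  assumes Sadd: "\<And>a b. S (a + b) = S a + S b" and Spsc: "\<And>c a. S (psc c a) = psc c (S a)"
begin

lemma mSL_alt: "mSL S y = linT (\<lambda>p. S (mono (fst p)) * mono (snd p)) y"
  by (simp add: mSL_def linT_def)
lemma mSR_alt: "mSR S y = linT (\<lambda>p. mono (fst p) * S (mono (snd p))) y"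
  by (simp add: mSR_def linT_def)

lemma mSL_add: "mSL S (a + b) = mSL S a + mSL S b" by (simp add: mSL_alt linT_add)
lemma mSL_psc: "mSL S (psc c a) = psc c (mSL S a)" by (simp add: mSL_alt linT_psc)
lemma mSR_add: "mSR S (a + b) = mSR S a + mSR S b" by (simp add: mSR_alt linT_add)
lemma mSR_psc: "mSR S (psc c a) = psc c (mSR S a)" by (simp add: mSR_alt linT_psc)

lemma mSL_tns: "mSL S (tns a b) = S a * b"
proof -
  have "mSL S (tns a b) = linT (\<lambda>u. mSL S (linT (\<lambda>v. mono (u, v)) b)) a"
    unfolding tns_alt by (rule linT_linear) (simp_all add: mSL_add mSL_psc)
  also have "\<dots> = linT (\<lambda>u. linT (\<lambda>v. S (mono u) * mono v) b) a"
  proof (rule linT_cong)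
    fix u
    show "mSL S (linT (\<lambda>v. mono (u, v)) b) = linT (\<lambda>v. S (mono u) * mono v) b"
      by (subst linT_linear[of "mSL S"]) (simp_all add: mSL_add mSL_psc, simp add: mSL_alt linT_mono)
  qed
  also have "\<dots> = linT (\<lambda>u. S (mono u) * b) a"
    by (simp add: linT_mult_left[symmetric] linT_mono_id)
  also have "\<dots> = S a * b"
    by (simp add: linT_mult_right[symmetric] linear_via_linT[OF Sadd Spsc, of a, symmetric])
  finally show ?thesis .
qed

lemma mSR_tns: "mSR S (tns a b) = a * S b"
proof -
  have "mSR S (tns a b) = linT (\<lambda>u. mSR S (linT (\<lambda>v. mono (u, v)) b)) a"
    unfolding tns_alt by (rule linT_linear) (simp_all add: mSR_add mSR_psc)
  also have "\<dots> = linT (\<lambda>u. linT (\<lambda>v. mono u * S (mono v)) b) a"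
  proof (rule linT_cong)
    fix u
    show "mSR S (linT (\<lambda>v. mono (u, v)) b) = linT (\<lambda>v. mono u * S (mono v)) b"
      by (subst linT_linear[of "mSR S"]) (simp_all add: mSR_add mSR_psc, simp add: mSR_alt linT_mono)
  qed
  also have "\<dots> = linT (\<lambda>u. mono u * S b) a"
    by (simp add: linT_mult_left[symmetric] linear_via_linT[OF Sadd Spsc, of b, symmetric])
  also have "\<dots> = a * S b"
    by (simp add: linT_mult_right[symmetric] linT_mono_id)
  finally show ?thesis .
qed

definition mSL_at :: "('m \<times> 'm \<Rightarrow>\<^sub>0 'k) \<Rightarrow> ('m \<Rightarrow>\<^sub>0 'k) \<Rightarrow> ('m \<Rightarrow>\<^sub>0 'k)" where
  "mSL_at y m = linT (\<lambda>p. S (mono (fst p)) * m * mono (snd p)) y"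
definition mSR_at :: "('m \<times> 'm \<Rightarrow>\<^sub>0 'k) \<Rightarrow> ('m \<Rightarrow>\<^sub>0 'k) \<Rightarrow> ('m \<Rightarrow>\<^sub>0 'k)" where
  "mSR_at y m = linT (\<lambda>p. mono (fst p) * m * S (mono (snd p))) y"

lemma mSL_at_add_m: "mSL_at y (m + m') = mSL_at y m + mSL_at y m'"
  by (simp add: mSL_at_def distrib_left distrib_right linT_fadd)
lemma mSL_at_psc_m: "mSL_at y (psc c m) = psc c (mSL_at y m)"
  by (simp add: mSL_at_def psc_mult_left[symmetric] psc_mult_right[symmetric] linT_fpsc)
lemma mSL_at_diff_m: "mSL_at y (m - m') = mSL_at y m - mSL_at y m'"
  by (simp add: mSL_at_def left_diff_distrib right_diff_distrib linT_fdiff)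
lemma mSR_at_add_m: "mSR_at y (m + m') = mSR_at y m + mSR_at y m'"
  by (simp add: mSR_at_def distrib_left distrib_right linT_fadd)
lemma mSR_at_psc_m: "mSR_at y (psc c m) = psc c (mSR_at y m)"
  by (simp add: mSR_at_def psc_mult_left[symmetric] psc_mult_right[symmetric] linT_fpsc)
lemma mSR_at_diff_m: "mSR_at y (m - m') = mSR_at y m - mSR_at y m'"
  by (simp add: mSR_at_def left_diff_distrib right_diff_distrib linT_fdiff)
lemma mSL_at_one: "mSL_at y 1 = mSL S y" by (simp add: mSL_at_def mSL_alt)
lemma mSR_at_one: "mSR_at y 1 = mSR S y" by (simp add: mSR_at_def mSR_alt)
lemma mSL_at_csc: "mSL_at y (csc c) = psc c (mSL S y)"
  by (simp add: psc_one_eq_csc[symmetric] mSL_at_psc_m mSL_at_one)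
lemma mSR_at_csc: "mSR_at y (csc c) = psc c (mSR S y)"
  by (simp add: psc_one_eq_csc[symmetric] mSR_at_psc_m mSR_at_one)

lemma mSL_at_cong: assumes J: "is_ideal J" and m: "m - m' \<in> J" shows "mSL_at y m - mSL_at y m' \<in> J"
proof -
  have "mSL_at y (m - m') \<in> J" unfolding mSL_at_def by (rule linT_in_ideal[OF J]) (rule ideal_mult_both[OF J m])
  then show ?thesis by (simp add: mSL_at_diff_m)
qed
lemma mSR_at_cong: assumes J: "is_ideal J" and m: "m - m' \<in> J" shows "mSR_at y m - mSR_at y m' \<in> J"
proof -
  have "mSR_at y (m - m') \<in> J" unfolding mSR_at_def by (rule linT_in_ideal[OF J]) (rule ideal_mult_both[OF J m])
  then show ?thesis by (simp add: mSR_at_diff_m)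
qed

context
  assumes Smul: "\<And>a b. S (a * b) = S b * S a"
begin

lemma mSL_mult: "mSL S (y * y') = mSL_at y' (mSL S y)"
proof (induction y rule: poly_mapping_induct)
  case (single p c)
  show ?case
  proof (induction y' rule: poly_mapping_induct)
    case (single p' d)
    show ?case
      by (simp add: mult_single mSL_alt mSL_at_def linT_single Smul single_psc_mono[of "(_, _)"]
          linT_psc psc_mult_both mono_mult[symmetric] linT_mono mult.assoc psc_mult_left[symmetric]
          psc_mult_right[symmetric] psc_psc mult.commute)
  next
    case (add a b) then show ?case by (simp add: distrib_left mSL_add mSL_at_def linT_add)
  qed (simp add: mSL_alt mSL_at_def)
next
  case (add a b) then show ?case by (simp add: distrib_right mSL_add mSL_at_add_m)
qed (simp add: mSL_alt mSL_at_def linT_fzero)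

lemma mSR_mult: "mSR S (y * y') = mSR_at y (mSR S y')"
proof (induction y rule: poly_mapping_induct)
  case (single p c)
  show ?case
  proof (induction y' rule: poly_mapping_induct)
    case (single p' d)
    show ?case
      by (simp add: mult_single mSR_alt mSR_at_def linT_single Smul single_psc_mono[of "(_, _)"]
          linT_psc psc_mult_both mono_mult[symmetric] linT_mono mult.assoc psc_mult_left[symmetric]
          psc_mult_right[symmetric] psc_psc mult.commute)
  next
    case (add a b) then show ?case by (simp add: distrib_left mSR_add mSR_at_add_m)
  qed (simp add: mSR_alt mSR_at_def linT_fzero)
next
  case (add a b) then show ?case by (simp add: distrib_right mSR_add mSR_at_def linT_add)
qed (simp add: mSR_alt mSR_at_def)

end

end

lemma DL_alt: "DL D y = linT (\<lambda>p. tnsL (D (mono (fst p))) (mono (snd p))) y"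
  by (simp add: DL_def linT_def tnsL_def linT_mono psc_sum psc_psc mono_def psc_single)
lemma DR_alt: "DR D y = linT (\<lambda>p. tnsR (mono (fst p)) (D (mono (snd p)))) y"
  by (simp add: DR_def linT_def tnsR_def linT_mono psc_sum psc_psc mono_def psc_single)

context
  fixes D :: "('m::monoid_add \<Rightarrow>\<^sub>0 'k::comm_ring_1) \<Rightarrow> ('m \<times> 'm \<Rightarrow>\<^sub>0 'k)"
  assumes Dadd: "\<And>a b. D (a + b) = D a + D b" and Dpsc: "\<And>c a. D (psc c a) = psc c (D a)"
begin

lemma DL_add: "DL D (a + b) = DL D a + DL D b" by (simp add: DL_alt linT_add)
lemma DL_psc: "DL D (psc c a) = psc c (DL D a)" by (simp add: DL_alt linT_psc)
lemma DR_add: "DR D (a + b) = DR D a + DR D b" by (simp add: DR_alt linT_add)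
lemma DR_psc: "DR D (psc c a) = psc c (DR D a)" by (simp add: DR_alt linT_psc)

lemma DL_tns: "DL D (tns a b) = tnsL (D a) b"
proof -
  have "DL D (tns a b) = linT (\<lambda>u. DL D (linT (\<lambda>v. mono (u, v)) b)) a"
    unfolding tns_alt by (rule linT_linear) (simp_all add: DL_add DL_psc)
  also have "\<dots> = linT (\<lambda>u. linT (\<lambda>v. tnsL (D (mono u)) (mono v)) b) a"
    by (rule linT_cong, subst linT_linear[of "DL D"]) (simp_all add: DL_add DL_psc, simp add: DL_alt linT_mono)
  also have "\<dots> = linT (\<lambda>u. tnsL (D (mono u)) b) a"
    by (rule linT_cong, rule linear_via_linT[symmetric]) (simp_all add: tnsL_lin)
  also have "\<dots> = tnsL (D a) b"
    by (subst (2) linear_via_linT[of D, OF Dadd Dpsc], rule linT_linear[symmetric]) (simp_all add: tnsL_lin)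
  finally show ?thesis .
qed

lemma DR_tns: "DR D (tns a b) = tnsR a (D b)"
proof -
  have "DR D (tns a b) = linT (\<lambda>u. DR D (linT (\<lambda>v. mono (u, v)) b)) a"
    unfolding tns_alt by (rule linT_linear) (simp_all add: DR_add DR_psc)
  also have "\<dots> = linT (\<lambda>u. linT (\<lambda>v. tnsR (mono u) (D (mono v))) b) a"
    by (rule linT_cong, subst linT_linear[of "DR D"]) (simp_all add: DR_add DR_psc, simp add: DR_alt linT_mono)
  also have "\<dots> = linT (\<lambda>u. tnsR (mono u) (D b)) a"
    by (rule linT_cong, subst (2) linear_via_linT[of D, OF Dadd Dpsc], rule linT_linear[symmetric])
       (simp_all add: tnsR_lin)
  also have "\<dots> = tnsR a (D b)"
    by (rule linear_via_linT[symmetric]) (simp_all add: tnsR_lin)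
  finally show ?thesis .
qed

context
  assumes Dmul: "\<And>a b. D (a * b) = D a * D b" and D1: "D 1 = 1"
begin

lemma DL_mult: "DL D (y * y') = DL D y * DL D y'"
  unfolding DL_alt by (rule linT_mult) (simp add: Dmul mono_mult[symmetric] tnsL_mult)
lemma DL_one: "DL D 1 = 1"
  unfolding DL_alt by (rule linT_one) (simp add: D1 mono_zero tnsL_one)
lemma DR_mult: "DR D (y * y') = DR D y * DR D y'"
  unfolding DR_alt by (rule linT_mult) (simp add: Dmul mono_mult[symmetric] tnsR_mult)
lemma DR_one: "DR D 1 = 1"
  unfolding DR_alt by (rule linT_one) (simp add: D1 mono_zero tnsR_one)

end

end

lemma EL_alt: "EL E y = linT (\<lambda>p. psc (E (mono (fst p))) (mono (snd p))) y"
  by (simp add: EL_def linT_def psc_psc)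
lemma ER_alt: "ER E y = linT (\<lambda>p. psc (E (mono (snd p))) (mono (fst p))) y"
  by (simp add: ER_def linT_def psc_psc)

lemma psc_sum_left: "psc (sum f A) b = (\<Sum>x\<in>A. psc (f x) b)"
  for f :: "_ \<Rightarrow> 'k::comm_ring_1"
  by (induction A rule: infinite_finite_induct) (simp_all add: psc_add_left)

context
  fixes E :: "('m::monoid_add \<Rightarrow>\<^sub>0 'k::comm_ring_1) \<Rightarrow> 'k"
  assumes Eadd: "\<And>a b. E (a + b) = E a + E b" and Epsc: "\<And>c a. E (psc c a) = c * E a"
begin

lemma E_alt: "E a = (\<Sum>u\<in>Poly_Mapping.keys a. Poly_Mapping.lookup a u * E (mono u))"
proof -
  have z: "E 0 = 0" using Epsc[of 0 0] by simp
  have sm: "E (sum g A) = (\<Sum>u\<in>A. E (g u))" for g and A :: "'m set"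
    by (induction A rule: infinite_finite_induct) (simp_all add: z Eadd)
  have "E a = E (linT mono a)" by (simp add: linT_mono_id)
  then show ?thesis by (simp add: linT_def sm Epsc)
qed

lemma EL_tns: "EL E (tns a b) = psc (E a) b"
proof -
  have "EL E (tns a b) = linT (\<lambda>u. EL E (linT (\<lambda>v. mono (u, v)) b)) a"
    unfolding tns_alt by (rule linT_linear) (simp_all add: EL_alt linT_add linT_psc)
  also have "\<dots> = linT (\<lambda>u. linT (\<lambda>v. psc (E (mono u)) (mono v)) b) a"
    by (rule linT_cong, subst linT_linear[of "EL E"]) (simp_all add: EL_alt linT_add linT_psc linT_mono)
  also have "\<dots> = linT (\<lambda>u. psc (E (mono u)) b) a"
    by (simp add: linT_fpsc linT_mono_id)
  also have "\<dots> = psc (E a) b"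
    by (subst E_alt) (simp add: linT_def psc_sum_left psc_psc)
  finally show ?thesis .
qed

lemma ER_tns: "ER E (tns a b) = psc (E b) a"
proof -
  have "ER E (tns a b) = linT (\<lambda>u. ER E (linT (\<lambda>v. mono (u, v)) b)) a"
    unfolding tns_alt by (rule linT_linear) (simp_all add: ER_alt linT_add linT_psc)
  also have "\<dots> = linT (\<lambda>u. linT (\<lambda>v. psc (E (mono v)) (mono u)) b) a"
    by (rule linT_cong, subst linT_linear[of "ER E"]) (simp_all add: ER_alt linT_add linT_psc linT_mono)
  also have "\<dots> = linT (\<lambda>u. psc (E b) (mono u)) a"
    by (rule linT_cong) (subst (2) E_alt, simp add: linT_def psc_sum_left psc_psc)
  also have "\<dots> = psc (E b) a"
    by (simp add: linT_fpsc linT_mono_id)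
  finally show ?thesis .
qed

context
  assumes Emul: "\<And>a b. E (a * b) = E a * E b" and E1: "E 1 = 1"
begin

lemma EL_mult: "EL E (y * y') = EL E y * EL E y'"
  unfolding EL_alt by (rule linT_mult) (simp add: Emul mono_mult[symmetric] psc_mult_both)
lemma EL_one: "EL E 1 = 1"
  unfolding EL_alt by (rule linT_one) (simp add: E1 mono_zero)
lemma ER_mult: "ER E (y * y') = ER E y * ER E y'"
  unfolding ER_alt by (rule linT_mult) (simp add: Emul mono_mult[symmetric] psc_mult_both)
lemma ER_one: "ER E 1 = 1"
  unfolding ER_alt by (rule linT_one) (simp add: E1 mono_zero)

end

end

lemma hext_single: "hext f (Wrd [v]) = f v" by (simp add: hext_def)
lemma ahext_single: "ahext f (Wrd [v]) = f v" by (simp add: ahext_def)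

lemma hat_eq_linT: "hat u = linT (\<lambda>j. gen (Some j)) u"
  by (simp add: hat_def linT_def)

context
  fixes k :: "'k::field"
begin

lemma Delta_add: "Delta k (a + b) = Delta k a + Delta k b"
  by (simp add: Delta_def linT_add)
lemma Delta_psc: "Delta k (psc c a) = psc c (Delta k a)"
  by (simp add: Delta_def linT_psc)
lemma Delta_mult: "Delta k (a * b) = Delta k a * Delta k b"
  unfolding Delta_def by (rule linT_mult) (simp add: hext_plus)
lemma Delta_one: "Delta k 1 = 1"
  unfolding Delta_def by (rule linT_one) (simp add: hext_zero)
lemma Delta_zero: "Delta k 0 = 0" by (simp add: Delta_def)
lemma Delta_diff: "Delta k (a - b) = Delta k a - Delta k b"
  by (simp add: Delta_def linT_diff)
lemma Delta_gen: "Delta k (gen v) = Dgen k v"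
  by (simp add: Delta_def gen_def linT_mono hext_single)

lemma Santi_add: "Santi k (a + b) = Santi k a + Santi k b"
  by (simp add: Santi_def linT_add)
lemma Santi_psc: "Santi k (psc c a) = psc c (Santi k a)"
  by (simp add: Santi_def linT_psc)
lemma Santi_mult: "Santi k (a * b) = Santi k b * Santi k a"
  unfolding Santi_def by (rule linT_mult_anti) (simp add: ahext_plus)
lemma Santi_one: "Santi k 1 = 1"
  unfolding Santi_def by (rule linT_one) (simp add: ahext_zero)
lemma Santi_zero: "Santi k 0 = 0" by (simp add: Santi_def)
lemma Santi_gen: "Santi k (gen v) = Sgen k v"
  by (simp add: Santi_def gen_def linT_mono ahext_single)
lemma Santi_diff: "Santi k (a - b) = Santi k a - Santi k b"
  by (simp add: Santi_def linT_diff)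

end

lemma Eps_add: "Eps (a + b) = Eps a + Eps b"
  by (simp add: Eps_def linK_add)
lemma Eps_psc: "Eps (psc c a) = c * Eps a"
  by (simp add: Eps_def linK_psc)
lemma Eps_mult: "Eps (a * b) = Eps a * Eps b"
  unfolding Eps_def by (rule linK_mult) (simp add: hext_plus)
lemma Eps_one: "Eps 1 = 1"
  unfolding Eps_def by (rule linK_one) (simp add: hext_zero)
lemma Eps_zero: "Eps 0 = 0" by (simp add: Eps_def)
lemma Eps_gen: "Eps (gen v) = (case v of None \<Rightarrow> 1 | Some j \<Rightarrow> 0)"
  by (simp add: Eps_def gen_def linK_mono hext_single)
lemma Eps_uminus: "Eps (- a) = - Eps a"
  by (metis Eps_add Eps_zero add_eq_0_iff add.right_inverse)
lemma Eps_diff: "Eps (a - b) = Eps a - Eps b"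
  by (metis diff_conv_add_uminus Eps_add Eps_uminus)

lemma Eps_sum: "Eps (sum g A) = (\<Sum>u\<in>A. Eps (g u))"
  by (induction A rule: infinite_finite_induct) (simp_all add: Eps_zero Eps_add)

lemma Eps_hat: "Eps (hat u) = 0"
  by (simp add: hat_def Eps_sum Eps_psc Eps_gen)

definition DeltaL :: "'k::field \<Rightarrow> ('x, 'k) tens \<Rightarrow> ('x, 'k) tens2" where
  "DeltaL k x = (let a = x + psc k (qt * x) - x * qt; b = - psc k (qt * x) + x * qt
             in tns a 1 + tns 1 a + tns b qt + tns qt b)"

lemma DeltaL_add: "DeltaL k (x + y) = DeltaL k x + DeltaL k y"
  by (simp add: DeltaL_def Let_def tns_lin distrib_left distrib_right psc_add_right algebra_simps)
lemma DeltaL_psc: "DeltaL k (psc c x) = psc c (DeltaL k x)"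
  by (simp add: DeltaL_def Let_def tns_lin psc_add_right psc_diff_right psc_uminus_right
      psc_mult_right[symmetric] psc_mult_left[symmetric] psc_psc mult.commute)

lemma Delta_hat: "Delta k (hat u) = DeltaL k (hat u)"
proof -
  have "Delta k (hat u) = linT (\<lambda>j. Delta k (gen (Some j))) u"
    unfolding hat_eq_linT by (rule linT_linear) (simp_all add: Delta_add Delta_psc)
  also have "\<dots> = linT (\<lambda>j. DeltaL k (gen (Some j))) u"
    by (rule linT_cong) (simp add: Delta_gen Dgen_def DeltaL_def Let_def)
  also have "\<dots> = DeltaL k (hat u)"
    unfolding hat_eq_linT by (rule linT_linear[symmetric]) (simp_all add: DeltaL_add DeltaL_psc)
  finally show ?thesis .
qed

definition SantiL :: "'k::field \<Rightarrow> ('x, 'k) tens \<Rightarrow> ('x, 'k) tens" where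
  "SantiL k x = psc (- (1 / k)) x + psc (1 / k - k) (x * qt)"

lemma SantiL_add: "SantiL k (x + y) = SantiL k x + SantiL k y"
  by (simp add: SantiL_def psc_add_right distrib_right)
lemma SantiL_psc: "SantiL k (psc c x) = psc c (SantiL k x)"
  by (simp add: SantiL_def psc_add_right psc_psc psc_mult_left[symmetric] mult.commute)

lemma Santi_hat: "Santi k (hat u) = SantiL k (hat u)"
proof -
  have "Santi k (hat u) = linT (\<lambda>j. Santi k (gen (Some j))) u"
    unfolding hat_eq_linT by (rule linT_linear) (simp_all add: Santi_add Santi_psc)
  also have "\<dots> = linT (\<lambda>j. SantiL k (gen (Some j))) u"
    by (rule linT_cong) (simp add: Santi_gen Sgen_def SantiL_def)
  also have "\<dots> = SantiL k (hat u)"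
    unfolding hat_eq_linT by (rule linT_linear[symmetric]) (simp_all add: SantiL_add SantiL_psc)
  finally show ?thesis .
qed

section \<open>Certified polynomial identities\<close>

text \<open>A formal polynomial is a list of terms (n, e, w) standing for n k^e w, where the word w
  over the letters Q, X, Y, Z is evaluated under an interpretation \<phi> (typically q, x, y and
  \<langle>x, y\<rangle>).\<close>

datatype letter = LQ | LX | LY | LZ

type_synonym fpoly = "(int \<times> int \<times> letter list) list"
type_synonym fpoly2 = "(int \<times> int \<times> letter list \<times> letter list) list"
type_synonym fpoly3 = "(int \<times> int \<times> letter list \<times> letter list \<times> letter list) list"

definition fcoeff :: "'k::field \<Rightarrow> int \<Rightarrow> int \<Rightarrow> 'k" where "fcoeff k n e = of_int n * power_int k e"
definition fword :: "(letter \<Rightarrow> 'a::monoid_mult) \<Rightarrow> letter list \<Rightarrow> 'a" where "fword \<phi> w = prod_list (map \<phi> w)"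

definition feval :: "'k::field \<Rightarrow> (letter \<Rightarrow> 'm::monoid_add \<Rightarrow>\<^sub>0 'k) \<Rightarrow> fpoly \<Rightarrow> ('m \<Rightarrow>\<^sub>0 'k)" where
  "feval k \<phi> A = sum_list (map (\<lambda>(n, e, w). psc (fcoeff k n e) (fword \<phi> w)) A)"
definition feval2 :: "'k::field \<Rightarrow> (letter \<Rightarrow> 'm::monoid_add \<Rightarrow>\<^sub>0 'k) \<Rightarrow> fpoly2 \<Rightarrow> ('m \<times> 'm \<Rightarrow>\<^sub>0 'k)" where
  "feval2 k \<phi> X = sum_list (map (\<lambda>(n, e, u, v). psc (fcoeff k n e) (tns (fword \<phi> u) (fword \<phi> v))) X)"
definition feval3 :: "'k::field \<Rightarrow> (letter \<Rightarrow> 'm::monoid_add \<Rightarrow>\<^sub>0 'k) \<Rightarrow> fpoly3 \<Rightarrow> ('m \<times> 'm \<times> 'm \<Rightarrow>\<^sub>0 'k)" where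
  "feval3 k \<phi> X = sum_list (map (\<lambda>(n, e, u, v, w). psc (fcoeff k n e) (tns3 (fword \<phi> u) (fword \<phi> v) (fword \<phi> w))) X)"

definition fmult :: "fpoly \<Rightarrow> fpoly \<Rightarrow> fpoly" where
  "fmult A B = concat (map (\<lambda>(n, e, u). map (\<lambda>(m, f, v). (n * m, e + f, u @ v)) B) A)"
definition fscale :: "int \<Rightarrow> int \<Rightarrow> fpoly \<Rightarrow> fpoly" where
  "fscale n e A = map (\<lambda>(m, f, w). (n * m, e + f, w)) A"
definition ftns2 :: "fpoly \<Rightarrow> fpoly \<Rightarrow> fpoly2" where
  "ftns2 A B = concat (map (\<lambda>(n, e, u). map (\<lambda>(m, f, v). (n * m, e + f, u, v)) B) A)"
definition fmult2 :: "fpoly2 \<Rightarrow> fpoly2 \<Rightarrow> fpoly2" where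
  "fmult2 X Y = concat (map (\<lambda>(n, e, u1, u2). map (\<lambda>(m, f, v1, v2). (n * m, e + f, u1 @ v1, u2 @ v2)) Y) X)"
definition fscale2 :: "int \<Rightarrow> int \<Rightarrow> fpoly2 \<Rightarrow> fpoly2" where
  "fscale2 n e X = map (\<lambda>(m, f, u, v). (n * m, e + f, u, v)) X"
definition fscale3 :: "int \<Rightarrow> int \<Rightarrow> fpoly3 \<Rightarrow> fpoly3" where
  "fscale3 n e X = map (\<lambda>(m, f, u, v, w). (n * m, e + f, u, v, w)) X"
definition ftns3 :: "fpoly \<Rightarrow> fpoly \<Rightarrow> fpoly \<Rightarrow> fpoly3" where
  "ftns3 A B C = concat (map (\<lambda>(n, e, u). concat (map (\<lambda>(m, f, v). map (\<lambda>(p, g, w). (n * m * p, e + f + g, u, v, w)) C) B)) A)"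

lemma feval_Nil[simp]: "feval k \<phi> [] = 0" by (simp add: feval_def)
lemma feval_Cons: "feval k \<phi> ((n, e, w) # A) = psc (fcoeff k n e) (fword \<phi> w) + feval k \<phi> A"
  by (simp add: feval_def)
lemma feval_append: "feval k \<phi> (A @ B) = feval k \<phi> A + feval k \<phi> B" by (simp add: feval_def)
lemma feval2_Nil[simp]: "feval2 k \<phi> [] = 0" by (simp add: feval2_def)
lemma feval2_Cons: "feval2 k \<phi> ((n, e, u, v) # A) = psc (fcoeff k n e) (tns (fword \<phi> u) (fword \<phi> v)) + feval2 k \<phi> A"
  by (simp add: feval2_def)
lemma feval2_append: "feval2 k \<phi> (A @ B) = feval2 k \<phi> A + feval2 k \<phi> B" by (simp add: feval2_def)
lemma feval3_Nil[simp]: "feval3 k \<phi> [] = 0" by (simp add: feval3_def)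
lemma feval3_append: "feval3 k \<phi> (A @ B) = feval3 k \<phi> A + feval3 k \<phi> B" by (simp add: feval3_def)

lemma fword_append: "fword \<phi> (u @ v) = fword \<phi> u * fword \<phi> v" by (simp add: fword_def)
lemma fword_Nil[simp]: "fword \<phi> [] = 1" by (simp add: fword_def)
lemma fword_Cons: "fword \<phi> (l # w) = \<phi> l * fword \<phi> w" by (simp add: fword_def)

lemma fcoeff_mult: "k \<noteq> 0 \<Longrightarrow> fcoeff k (n * m) (e + f) = fcoeff k n e * fcoeff k m f"
  by (simp add: fcoeff_def power_int_add)
lemma fcoeff_add: "fcoeff k (n + m) e = fcoeff k n e + fcoeff k m e"
  by (simp add: fcoeff_def distrib_right)
lemma fcoeff_zero[simp]: "fcoeff k 0 e = 0" by (simp add: fcoeff_def)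

context fixes k :: "'k::field" and \<phi> :: "letter \<Rightarrow> ('m::monoid_add \<Rightarrow>\<^sub>0 'k)" assumes k: "k \<noteq> 0"
begin

lemma feval_fmult: "feval k \<phi> (fmult A B) = feval k \<phi> A * feval k \<phi> B"
proof (induction A)
  case (Cons t A)
  obtain n e u where t: "t = (n, e, u)" by (cases t) auto
  have "feval k \<phi> (map (\<lambda>(m, f, v). (n * m, e + f, u @ v)) B) = psc (fcoeff k n e) (fword \<phi> u) * feval k \<phi> B"
    by (induction B) (auto simp: feval_Cons distrib_left fcoeff_mult[OF k] psc_mult_both fword_append)
  with Cons show ?case by (simp add: fmult_def t feval_append feval_Cons distrib_right)
qed (simp add: fmult_def)

lemma feval_fscale: "feval k \<phi> (fscale n e A) = psc (fcoeff k n e) (feval k \<phi> A)"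
  by (induction A) (auto simp: fscale_def feval_Cons psc_add_right fcoeff_mult[OF k] psc_psc)

lemma feval2_ftns2: "feval2 k \<phi> (ftns2 A B) = tns (feval k \<phi> A) (feval k \<phi> B)"
proof (induction A)
  case (Cons t A)
  obtain n e u where t: "t = (n, e, u)" by (cases t) auto
  have "feval2 k \<phi> (map (\<lambda>(m, f, v). (n * m, e + f, u, v)) B) = tns (psc (fcoeff k n e) (fword \<phi> u)) (feval k \<phi> B)"
    by (induction B) (auto simp: feval2_def feval_Cons tns_lin fcoeff_mult[OF k] psc_psc psc_add_right)
  with Cons show ?case by (simp add: ftns2_def t feval2_append feval_Cons tns_lin)
qed (simp add: ftns2_def)

lemma feval2_fmult2: "feval2 k \<phi> (fmult2 X Y) = feval2 k \<phi> X * feval2 k \<phi> Y"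
proof (induction X)
  case (Cons t X)
  obtain n e u1 u2 where t: "t = (n, e, u1, u2)" by (cases t) auto
  have "feval2 k \<phi> (map (\<lambda>(m, f, v1, v2). (n * m, e + f, u1 @ v1, u2 @ v2)) Y)
      = psc (fcoeff k n e) (tns (fword \<phi> u1) (fword \<phi> u2)) * feval2 k \<phi> Y"
    by (induction Y) (auto simp: feval2_def distrib_left fcoeff_mult[OF k] psc_mult_both fword_append tns_mult)
  with Cons show ?case by (simp add: fmult2_def t feval2_append distrib_right feval2_Cons)
qed (simp add: fmult2_def)

lemma feval2_fscale2: "feval2 k \<phi> (fscale2 n e X) = psc (fcoeff k n e) (feval2 k \<phi> X)"
  by (induction X) (auto simp: fscale2_def feval2_def psc_add_right fcoeff_mult[OF k] psc_psc)

lemma feval3_fscale3: "feval3 k \<phi> (fscale3 n e X) = psc (fcoeff k n e) (feval3 k \<phi> X)"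
  by (induction X) (auto simp: fscale3_def feval3_def psc_add_right fcoeff_mult[OF k] psc_psc)

lemma feval3_ftns3: "feval3 k \<phi> (ftns3 A B C) = tns3 (feval k \<phi> A) (feval k \<phi> B) (feval k \<phi> C)"
proof (induction A)
  case (Cons t A)
  obtain n e u where t: "t = (n, e, u)" by (cases t) auto
  have "feval3 k \<phi> (concat (map (\<lambda>(m, f, v). map (\<lambda>(p, g, w). (n * m * p, e + f + g, u, v, w)) C) B))
      = tns3 (psc (fcoeff k n e) (fword \<phi> u)) (feval k \<phi> B) (feval k \<phi> C)"
  proof (induction B)
    case (Cons s B)
    obtain m f v where s: "s = (m, f, v)" by (cases s) auto
    have "feval3 k \<phi> (map (\<lambda>(p, g, w). (n * m * p, e + f + g, u, v, w)) C)
        = tns3 (psc (fcoeff k n e) (fword \<phi> u)) (psc (fcoeff k m f) (fword \<phi> v)) (feval k \<phi> C)"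
      by (induction C) (auto simp: feval3_def feval_Cons tns3_lin fcoeff_mult[OF k] psc_psc psc_add_right,
          simp add: mult.commute)
    with Cons show ?case by (simp add: s feval3_append feval_Cons tns3_lin)
  qed simp
  with Cons show ?case by (simp add: ftns3_def t feval3_append feval_Cons tns3_lin)
qed (simp add: ftns3_def)

end

lemma feval3_Cons: "feval3 k \<phi> ((n, e, u, v, w) # A) = psc (fcoeff k n e) (tns3 (fword \<phi> u) (fword \<phi> v) (fword \<phi> w)) + feval3 k \<phi> A"
  by (simp add: feval3_def)

definition fhom_word :: "(letter \<Rightarrow> fpoly2) \<Rightarrow> letter list \<Rightarrow> fpoly2" where
  "fhom_word fD w = foldr (\<lambda>l acc. fmult2 (fD l) acc) w [(1, 0, [], [])]"
definition fhom :: "(letter \<Rightarrow> fpoly2) \<Rightarrow> fpoly \<Rightarrow> fpoly2" where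
  "fhom fD A = concat (map (\<lambda>(n, e, w). fscale2 n e (fhom_word fD w)) A)"
definition fanti_word :: "(letter \<Rightarrow> fpoly) \<Rightarrow> letter list \<Rightarrow> fpoly" where
  "fanti_word fS w = foldr (\<lambda>l acc. fmult acc (fS l)) w [(1, 0, [])]"
definition fanti :: "(letter \<Rightarrow> fpoly) \<Rightarrow> fpoly \<Rightarrow> fpoly" where
  "fanti fS A = concat (map (\<lambda>(n, e, w). fscale n e (fanti_word fS w)) A)"

lemma feval_unit[simp]: "feval k \<phi> [(1, 0, [])] = 1" by (simp add: feval_def fcoeff_def)
lemma feval2_unit[simp]: "feval2 k \<phi> [(1, 0, [], [])] = (1 :: ('m::monoid_add \<times> 'm) \<Rightarrow>\<^sub>0 'k::field)"
  by (simp add: feval2_def fcoeff_def tns_one)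

context fixes k :: "'k::field" and \<phi> :: "letter \<Rightarrow> ('m::monoid_add \<Rightarrow>\<^sub>0 'k)" assumes k: "k \<noteq> 0"
begin

lemma hom_feval:
  fixes D :: "('m \<Rightarrow>\<^sub>0 'k) \<Rightarrow> ('m \<times> 'm \<Rightarrow>\<^sub>0 'k)"
  assumes add: "\<And>a b. D (a + b) = D a + D b" and sc: "\<And>c a. D (psc c a) = psc c (D a)"
    and mul: "\<And>a b. D (a * b) = D a * D b" and one: "D 1 = 1"
    and gl: "\<And>l. D (\<phi> l) = feval2 k \<phi> (fD l)"
  shows "D (feval k \<phi> A) = feval2 k \<phi> (fhom fD A)"
proof -
  have z: "D 0 = 0" using sc[of 0 0] by simp
  have w: "D (fword \<phi> w) = feval2 k \<phi> (fhom_word fD w)" for w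
    by (induction w) (simp_all add: fhom_word_def one fword_Cons mul gl feval2_fmult2[OF k])
  show ?thesis
  proof (induction A)
    case (Cons t A)
    obtain n e u where t: "t = (n, e, u)" by (cases t) auto
    with Cons show ?case by (simp add: feval_Cons fhom_def add sc w feval2_append feval2_fscale2[OF k])
  qed (simp add: fhom_def z)
qed

lemma antihom_feval:
  fixes S :: "('m \<Rightarrow>\<^sub>0 'k) \<Rightarrow> ('m \<Rightarrow>\<^sub>0 'k)"
  assumes add: "\<And>a b. S (a + b) = S a + S b" and sc: "\<And>c a. S (psc c a) = psc c (S a)"
    and mul: "\<And>a b. S (a * b) = S b * S a" and one: "S 1 = 1"
    and gl: "\<And>l. S (\<phi> l) = feval k \<phi> (fS l)"
  shows "S (feval k \<phi> A) = feval k \<phi> (fanti fS A)"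
proof -
  have z: "S 0 = 0" using sc[of 0 0] by simp
  have w: "S (fword \<phi> w) = feval k \<phi> (fanti_word fS w)" for w
    by (induction w) (simp_all add: fanti_word_def one fword_Cons mul gl feval_fmult[OF k])
  show ?thesis
  proof (induction A)
    case (Cons t A)
    obtain n e u where t: "t = (n, e, u)" by (cases t) auto
    with Cons show ?case by (simp add: feval_Cons fanti_def add sc w feval_append feval_fscale[OF k])
  qed (simp add: fanti_def z)
qed

end

fun collapse_q :: "letter list \<Rightarrow> letter list" where
  "collapse_q [] = []"
| "collapse_q (l # w) = (if l = LQ then LQ # filter (\<lambda>x. x \<noteq> LQ) w else l # collapse_q w)"

definition subst_letter :: "fpoly \<Rightarrow> letter \<Rightarrow> fpoly" where
  "subst_letter fZ l = (if l = LZ then fZ else [(1, 0, [l])])"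
definition subst_word :: "fpoly \<Rightarrow> letter list \<Rightarrow> fpoly" where
  "subst_word fZ w = foldr (\<lambda>l acc. fmult (subst_letter fZ l) acc) w [(1, 0, [])]"
definition freduce_word :: "fpoly \<Rightarrow> letter list \<Rightarrow> fpoly" where
  "freduce_word fZ w = map (\<lambda>(n, e, u). (n, e, collapse_q u)) (subst_word fZ w)"
definition freduce :: "fpoly \<Rightarrow> fpoly \<Rightarrow> fpoly" where
  "freduce fZ A = concat (map (\<lambda>(n, e, w). fscale n e (freduce_word fZ w)) A)"
definition freduce2 :: "fpoly \<Rightarrow> fpoly2 \<Rightarrow> fpoly2" where
  "freduce2 fZ X = concat (map (\<lambda>(n, e, u, v). fscale2 n e (ftns2 (freduce_word fZ u) (freduce_word fZ v))) X)"
definition freduce3 :: "fpoly \<Rightarrow> fpoly3 \<Rightarrow> fpoly3" where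
  "freduce3 fZ X = concat (map (\<lambda>(n, e, u, v, w). fscale3 n e (ftns3 (freduce_word fZ u) (freduce_word fZ v) (freduce_word fZ w))) X)"

locale reduction =
  fixes k :: "'k::field" and \<phi> :: "letter \<Rightarrow> ('m::monoid_add \<Rightarrow>\<^sub>0 'k)" and J :: "('m \<Rightarrow>\<^sub>0 'k) set"
    and fZ :: fpoly
  assumes k: "k \<noteq> 0" and J: "is_ideal J"
    and qq: "\<phi> LQ * \<phi> LQ - \<phi> LQ \<in> J"
    and qaq: "\<And>a. \<phi> LQ * a * \<phi> LQ - \<phi> LQ * a \<in> J"
    and zZ: "\<phi> LZ - feval k \<phi> fZ \<in> J"
begin

lemma drop_q_cong: "\<phi> LQ * a * fword \<phi> w - \<phi> LQ * a * fword \<phi> (filter (\<lambda>x. x \<noteq> LQ) w) \<in> J"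
proof (induction w arbitrary: a)
  case Nil then show ?case by (simp add: ideal_zero[OF J])
next
  case (Cons l w)
  show ?case
  proof (cases "l = LQ")
    case True
    have "\<phi> LQ * a * \<phi> LQ * fword \<phi> w - \<phi> LQ * a * fword \<phi> w \<in> J"
      using ideal_mult_right[OF J qaq[of a], of "fword \<phi> w"] by (simp add: algebra_simps)
    with Cons[of a] show ?thesis using True
      by (simp add: fword_Cons mult.assoc) (metis ideal_cong_trans[OF J] mult.assoc)
  next
    case False
    with Cons[of "a * \<phi> l"] show ?thesis by (simp add: fword_Cons mult.assoc)
  qed
qed

lemma collapse_q_cong: "fword \<phi> w - fword \<phi> (collapse_q w) \<in> J"
proof (induction w)
  case Nil then show ?case by (simp add: ideal_zero[OF J])
next
  case (Cons l w)
  show ?case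
  proof (cases "l = LQ")
    case True
    then show ?thesis using drop_q_cong[of 1 w] by (simp add: fword_Cons)
  next
    case False
    then show ?thesis using ideal_mult_left[OF J Cons, of "\<phi> l"] by (simp add: fword_Cons algebra_simps)
  qed
qed

lemma subst_letter_cong: "\<phi> l - feval k \<phi> (subst_letter fZ l) \<in> J"
  using zZ by (auto simp: subst_letter_def feval_def fcoeff_def ideal_zero[OF J] fword_Cons)

lemma subst_word_cong: "fword \<phi> w - feval k \<phi> (subst_word fZ w) \<in> J"
proof (induction w)
  case Nil then show ?case by (simp add: subst_word_def ideal_zero[OF J])
next
  case (Cons l w)
  then show ?case using ideal_cong_mult[OF J subst_letter_cong[of l] Cons]
    by (simp add: subst_word_def fword_Cons feval_fmult[OF k])
qed

lemma freduce_word_cong: "fword \<phi> w - feval k \<phi> (freduce_word fZ w) \<in> J"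
proof -
  have "feval k \<phi> A - feval k \<phi> (map (\<lambda>(n, e, u). (n, e, collapse_q u)) A) \<in> J" for A
  proof (induction A)
    case Nil then show ?case by (simp add: ideal_zero[OF J])
  next
    case (Cons t A)
    obtain n e u where t: "t = (n, e, u)" by (cases t) auto
    show ?case using ideal_cong_add[OF J ideal_cong_psc[OF J collapse_q_cong[of u], of "fcoeff k n e"] Cons]
      by (simp add: t feval_Cons)
  qed
  then show ?thesis unfolding freduce_word_def using ideal_cong_trans[OF J subst_word_cong] by blast
qed

lemma freduce_cong: "feval k \<phi> A - feval k \<phi> (freduce fZ A) \<in> J"
proof (induction A)
  case Nil then show ?case by (simp add: freduce_def ideal_zero[OF J])
next
  case (Cons t A)
  obtain n e u where t: "t = (n, e, u)" by (cases t) auto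
  show ?case using ideal_cong_add[OF J ideal_cong_psc[OF J freduce_word_cong[of u], of "fcoeff k n e"] Cons]
    by (simp add: t feval_Cons freduce_def feval_append feval_fscale[OF k])
qed

lemma freduce2_cong: "feval2 k \<phi> X - feval2 k \<phi> (freduce2 fZ X) \<in> J2 J"
proof (induction X)
  case Nil then show ?case by (simp add: freduce2_def ideal_zero[OF is_ideal_J2])
next
  case (Cons t X)
  obtain n e u v where t: "t = (n, e, u, v)" by (cases t) auto
  show ?case using ideal_cong_add[OF is_ideal_J2 ideal_cong_psc[OF is_ideal_J2 tns_cong_J2[OF freduce_word_cong[of u] freduce_word_cong[of v]],
        of "fcoeff k n e"] Cons]
    by (simp add: t feval2_Cons freduce2_def feval2_append feval2_fscale2[OF k] feval2_ftns2[OF k])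
qed

lemma freduce3_cong: "feval3 k \<phi> X - feval3 k \<phi> (freduce3 fZ X) \<in> J3 J"
proof (induction X)
  case Nil then show ?case by (simp add: freduce3_def ideal_zero[OF is_ideal_J3])
next
  case (Cons t X)
  obtain n e u v w where t: "t = (n, e, u, v, w)" by (cases t) auto
  show ?case using ideal_cong_add[OF is_ideal_J3 ideal_cong_psc[OF is_ideal_J3 tns3_cong_J3[OF freduce_word_cong[of u] freduce_word_cong[of v] freduce_word_cong[of w]],
        of "fcoeff k n e"] Cons]
    by (simp add: t feval3_Cons freduce3_def feval3_append feval3_fscale3[OF k] feval3_ftns3[OF k])
qed

end

fun add_entry :: "int \<Rightarrow> 'a \<Rightarrow> ('a \<times> int) list \<Rightarrow> ('a \<times> int) list" where
  "add_entry n key [] = [(key, n)]"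
| "add_entry n key ((key', m) # r) = (if key = key' then (key', n + m) # r else (key', m) # add_entry n key r)"

definition cancels :: "('t \<Rightarrow> int \<times> 'a) \<Rightarrow> 't list \<Rightarrow> bool" where
  "cancels sp ts = list_all (\<lambda>(key, n). n = 0) (foldl (\<lambda>acc t. add_entry (fst (sp t)) (snd (sp t)) acc) [] ts)"

lemma cancels_sum_list_zero:
  fixes g :: "'a \<Rightarrow> int \<Rightarrow> 'v::ab_group_add"
  assumes val: "\<And>t. val t = g (snd (sp t)) (fst (sp t))"
    and gadd: "\<And>key n m. g key (n + m) = g key n + g key m" and g0: "\<And>key. g key 0 = 0"
    and z: "cancels sp ts"
  shows "sum_list (map val ts) = 0"
proof -
  define av where "av L = sum_list (map (\<lambda>(key, n). g key n) L)" for L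
  have add_entry: "av (add_entry n key L) = g key n + av L" for n key L
    by (induction L rule: add_entry.induct) (auto simp: av_def gadd algebra_simps)
  have fo: "av (foldl (\<lambda>acc t. add_entry (fst (sp t)) (snd (sp t)) acc) acc ts) = av acc + sum_list (map val ts)" for acc
    by (induction ts arbitrary: acc) (simp_all add: add_entry val algebra_simps)
  have "av L = 0" if "list_all (\<lambda>(key, n). n = 0) L" for L
    using that by (induction L) (auto simp: av_def g0)
  with z fo[of "[]"] show ?thesis by (simp add: cancels_def av_def)
qed

definition key1 :: "int \<times> int \<times> letter list \<Rightarrow> int \<times> (int \<times> letter list)" where
  "key1 t = (case t of (n, e, w) \<Rightarrow> (n, (e, w)))"
definition key2 :: "int \<times> int \<times> letter list \<times> letter list \<Rightarrow> int \<times> (int \<times> letter list \<times> letter list)" where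
  "key2 t = (case t of (n, e, u, v) \<Rightarrow> (n, (e, u, v)))"
definition key3 :: "int \<times> int \<times> letter list \<times> letter list \<times> letter list \<Rightarrow> int \<times> (int \<times> letter list \<times> letter list \<times> letter list)" where
  "key3 t = (case t of (n, e, u, v, w) \<Rightarrow> (n, (e, u, v, w)))"

lemma feval_cancels: "cancels key1 A \<Longrightarrow> feval k \<phi> A = 0"
  unfolding feval_def
  by (rule cancels_sum_list_zero[where g = "\<lambda>(e, w) n. psc (fcoeff k n e) (fword \<phi> w)"])
     (auto simp: key1_def fcoeff_add psc_add_left split: prod.splits)

lemma feval2_cancels: "cancels key2 X \<Longrightarrow> feval2 k \<phi> X = 0"
  unfolding feval2_def
  by (rule cancels_sum_list_zero[where g = "\<lambda>(e, u, v) n. psc (fcoeff k n e) (tns (fword \<phi> u) (fword \<phi> v))"])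
     (auto simp: key2_def fcoeff_add psc_add_left split: prod.splits)

lemma feval3_cancels: "cancels key3 X \<Longrightarrow> feval3 k \<phi> X = 0"
  unfolding feval3_def
  by (rule cancels_sum_list_zero[where g = "\<lambda>(e, u, v, w) n. psc (fcoeff k n e) (tns3 (fword \<phi> u) (fword \<phi> v) (fword \<phi> w))"])
     (auto simp: key3_def fcoeff_add psc_add_left split: prod.splits)

context reduction begin
lemma ideal_by_cancellation: "cancels key1 (freduce fZ A) \<Longrightarrow> feval k \<phi> A \<in> J"
  using freduce_cong[of A] feval_cancels[of "freduce fZ A" k \<phi>] by simp
lemma J2_by_cancellation: "cancels key2 (freduce2 fZ X) \<Longrightarrow> feval2 k \<phi> X \<in> J2 J"
  using freduce2_cong[of X] feval2_cancels[of "freduce2 fZ X" k \<phi>] by simp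
lemma J3_by_cancellation: "cancels key3 (freduce3 fZ X) \<Longrightarrow> feval3 k \<phi> X \<in> J3 J"
  using freduce3_cong[of X] feval3_cancels[of "freduce3 fZ X" k \<phi>] by simp
end

section \<open>The defining ideal of H\<close>

lemma is_ideal_JH: "is_ideal (JH br k)" by (simp add: JH_def is_ideal_ideal_of)
lemma JH_qq: "qt * qt - qt \<in> JH br k"
  unfolding JH_def by (rule generator_in_ideal_of) (simp add: I_gens_def)
lemma JH_qaq: "qt * a * qt - qt * a \<in> JH br k"
  unfolding JH_def by (rule generator_in_ideal_of) (auto simp: I_gens_def)
lemma JH_R: "hat (br x y) - hat x * hat y + hat y * hat x - hat y * qt * hat x
        + hat x * hat y * qt - psc k (hat x * qt * hat y) + psc k (qt * hat y * hat x) \<in> JH br k"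
  unfolding JH_def by (rule generator_in_ideal_of) (auto simp: R_gens_def)

definition fq :: fpoly where "fq = [(1, 0, [LQ])]"
definition fDelta_a :: "letter \<Rightarrow> fpoly" where "fDelta_a l = [(1, 0, [l]), (1, 1, [LQ, l]), (-1, 0, [l, LQ])]"
definition fDelta_b :: "letter \<Rightarrow> fpoly" where "fDelta_b l = [(-1, 1, [LQ, l]), (1, 0, [l, LQ])]"
definition fDelta_letter :: "letter \<Rightarrow> fpoly2" where "fDelta_letter l = (if l = LQ then [(1, 0, [LQ], [LQ])] else
   ftns2 (fDelta_a l) [(1, 0, [])] @ ftns2 [(1, 0, [])] (fDelta_a l) @ ftns2 (fDelta_b l) fq @ ftns2 fq (fDelta_b l))"
definition fS_letter :: "letter \<Rightarrow> fpoly" where "fS_letter l = (if l = LQ then [(1, 0, []), (-1, 0, [LQ])] else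
   [(-1, -1, [l]), (1, -1, [l, LQ]), (-1, 1, [l, LQ])])"
text \<open>frel is the generator of R with Z in place of \<langle>x, y\<rangle>, and fbracket = Z - frel is the
  value of Z modulo R.\<close>
definition fbracket :: fpoly where "fbracket = [(1, 0, [LX, LY]), (-1, 0, [LY, LX]), (1, 0, [LY, LQ, LX]),
   (-1, 0, [LX, LY, LQ]), (1, 1, [LX, LQ, LY]), (-1, 1, [LQ, LY, LX])]"
definition frel :: fpoly where "frel = [(1, 0, [LZ]), (-1, 0, [LX, LY]), (1, 0, [LY, LX]), (-1, 0, [LY, LQ, LX]),
   (1, 0, [LX, LY, LQ]), (-1, 1, [LX, LQ, LY]), (1, 1, [LQ, LY, LX])]"

definition rel_val :: "(('x \<Rightarrow>\<^sub>0 'k::field) \<Rightarrow> ('x \<Rightarrow>\<^sub>0 'k) \<Rightarrow> ('x \<Rightarrow>\<^sub>0 'k)) \<Rightarrow> ('x \<Rightarrow>\<^sub>0 'k) \<Rightarrow> ('x \<Rightarrow>\<^sub>0 'k)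
    \<Rightarrow> letter \<Rightarrow> ('x, 'k) tens" where
  "rel_val br x y l = (case l of LQ \<Rightarrow> qt | LX \<Rightarrow> hat x | LY \<Rightarrow> hat y | LZ \<Rightarrow> hat (br x y))"
definition gen_val :: "'x \<Rightarrow> letter \<Rightarrow> ('x, 'k::field) tens" where
  "gen_val j l = (case l of LQ \<Rightarrow> qt | LX \<Rightarrow> gen (Some j) | LY \<Rightarrow> 0 | LZ \<Rightarrow> 0)"

lemma fcoeff_simps: "fcoeff k 1 0 = 1" "fcoeff k (-1) 0 = -1" "fcoeff k 1 1 = k" "fcoeff k (-1) 1 = - k"
  "k \<noteq> 0 \<Longrightarrow> fcoeff k (-1) (-1) = - (1 / k)" "k \<noteq> 0 \<Longrightarrow> fcoeff k 1 (-1) = 1 / k"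
  by (simp_all add: fcoeff_def power_int_minus divide_inverse)

lemma feval_frel: "feval k (rel_val br x y) frel = hat (br x y) - hat x * hat y + hat y * hat x - hat y * qt * hat x
        + hat x * hat y * qt - psc k (hat x * qt * hat y) + psc k (qt * hat y * hat x)"
  by (simp add: frel_def feval_Cons fcoeff_simps fword_Cons rel_val_def psc_uminus_left mult.assoc)

lemma feval_fbracket: "hat (br x y) - feval k (rel_val br x y) fbracket = hat (br x y) - hat x * hat y + hat y * hat x - hat y * qt * hat x
        + hat x * hat y * qt - psc k (hat x * qt * hat y) + psc k (qt * hat y * hat x)"
  by (simp add: fbracket_def feval_Cons fcoeff_simps fword_Cons rel_val_def psc_uminus_left mult.assoc algebra_simps)

lemma reduction_rel: assumes "k \<noteq> 0" shows "reduction k (rel_val br x y) (JH br k) fbracket"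
proof
  have e: "rel_val br x y LZ = hat (br x y)" by (simp add: rel_val_def)
  show "rel_val br x y LZ - feval k (rel_val br x y) fbracket \<in> JH br k"
    unfolding e feval_fbracket by (rule JH_R)
qed (simp_all add: assms is_ideal_JH rel_val_def JH_qq JH_qaq)

lemma reduction_gen: "k \<noteq> 0 \<Longrightarrow> reduction k (gen_val j) (JH br k) []"
  by (unfold_locales) (simp_all add: is_ideal_JH gen_val_def JH_qq JH_qaq ideal_zero[OF is_ideal_JH])

lemma hat_single: "hat (Poly_Mapping.single j 1) = gen (Some j)"
  by (simp add: hat_def)
lemma hat_zero: "hat 0 = 0" by (simp add: hat_def)

lemma feval2_fDelta_letter_LQ: "feval2 k \<phi> (fDelta_letter LQ) = tns (\<phi> LQ) (\<phi> LQ)"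
  by (simp add: fDelta_letter_def feval2_def fcoeff_def fword_def)

lemma feval2_fDelta_letter:
  assumes k: "k \<noteq> 0" and q: "\<phi> LQ = qt" and l: "l \<noteq> LQ"
  shows "feval2 k \<phi> (fDelta_letter l) = DeltaL k (\<phi> l)"
proof -
  have A: "feval k \<phi> (fDelta_a l) = \<phi> l + psc k (qt * \<phi> l) - \<phi> l * qt"
    by (simp add: fDelta_a_def feval_Cons fcoeff_simps fword_Cons q psc_uminus_left)
  have B: "feval k \<phi> (fDelta_b l) = - psc k (qt * \<phi> l) + \<phi> l * qt"
    by (simp add: fDelta_b_def feval_Cons fcoeff_simps fword_Cons q psc_uminus_left)
  have Q: "feval k \<phi> fq = qt" by (simp add: fq_def feval_Cons fcoeff_simps fword_Cons q)
  show ?thesis using l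
    by (simp add: fDelta_letter_def feval2_append feval2_ftns2[OF k] A B Q DeltaL_def Let_def)
qed

lemma feval_fS_letter:
  assumes k: "k \<noteq> 0" and q: "\<phi> LQ = qt" and l: "l \<noteq> LQ"
  shows "feval k \<phi> (fS_letter l) = SantiL k (\<phi> l)"
  using l k by (simp add: fS_letter_def feval_Cons fcoeff_simps fword_Cons q SantiL_def psc_uminus_left psc_diff_left
      psc_add_left algebra_simps)

lemma feval_fS_letter_LQ: "feval k \<phi> (fS_letter LQ) = 1 - \<phi> LQ"
  by (simp add: fS_letter_def feval_Cons fcoeff_simps fword_Cons psc_uminus_left)

lemma Delta_qt: "Delta k qt = tns qt qt"
  by (simp add: qt_def Delta_gen Dgen_def)
lemma Santi_qt: "Santi k qt = 1 - qt"
  by (simp add: qt_def Santi_gen Sgen_def)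
lemma Eps_qt: "Eps qt = 1"
  by (simp add: qt_def Eps_gen)

lemma Delta_rel_val: "k \<noteq> 0 \<Longrightarrow> Delta k (rel_val br x y l) = feval2 k (rel_val br x y) (fDelta_letter l)"
  by (cases l) (simp_all add: feval2_fDelta_letter_LQ feval2_fDelta_letter rel_val_def Delta_qt Delta_hat)
lemma Delta_gen_val: "k \<noteq> 0 \<Longrightarrow> Delta k (gen_val j l) = feval2 k (gen_val j) (fDelta_letter l)"
  using Delta_hat[of k "Poly_Mapping.single j 1"] Delta_hat[of k 0]
  by (cases l) (simp_all add: feval2_fDelta_letter_LQ feval2_fDelta_letter gen_val_def Delta_qt hat_single hat_zero)
lemma Santi_rel_val: "k \<noteq> 0 \<Longrightarrow> Santi k (rel_val br x y l) = feval k (rel_val br x y) (fS_letter l)"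
  by (cases l) (simp_all add: feval_fS_letter_LQ feval_fS_letter rel_val_def Santi_qt Santi_hat)
lemma Santi_gen_val: "k \<noteq> 0 \<Longrightarrow> Santi k (gen_val j l) = feval k (gen_val j) (fS_letter l)"
  using Santi_hat[of k "Poly_Mapping.single j 1"] Santi_hat[of k 0]
  by (cases l) (simp_all add: feval_fS_letter_LQ feval_fS_letter gen_val_def Santi_qt hat_single hat_zero)

definition fDelta_left :: "fpoly2 \<Rightarrow> fpoly3" where
  "fDelta_left X = concat (map (\<lambda>(n, e, u, v). fscale3 n e (map (\<lambda>(m, f, a, b). (m, f, a, b, v)) (fhom_word fDelta_letter u))) X)"
definition fDelta_right :: "fpoly2 \<Rightarrow> fpoly3" where
  "fDelta_right X = concat (map (\<lambda>(n, e, u, v). fscale3 n e (map (\<lambda>(m, f, a, b). (m, f, u, a, b)) (fhom_word fDelta_letter v))) X)"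
definition fS_left :: "fpoly2 \<Rightarrow> fpoly" where
  "fS_left X = concat (map (\<lambda>(n, e, u, v). fscale n e (fmult (fanti_word fS_letter u) [(1, 0, v)])) X)"
definition fS_right :: "fpoly2 \<Rightarrow> fpoly" where
  "fS_right X = concat (map (\<lambda>(n, e, u, v). fscale n e (fmult [(1, 0, u)] (fanti_word fS_letter v))) X)"
definition fsigma :: "fpoly \<Rightarrow> fpoly" where
  "fsigma A = A @ fmult fq A @ fmult A (fscale (-1) 0 fq)"

text \<open>Forgetting the powers of k is sound only for k = 1, the only case in which the left
  antipode identity holds on x without \<sigma>.\<close>
definition fdrop_k :: "fpoly \<Rightarrow> fpoly" where
  "fdrop_k A = map (\<lambda>(n, e, w). (n, 0, w)) A"

text \<open>The only facts about the particular formulas for \<Delta> and S on x that the proof needs,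
  decided by evaluation.\<close>

lemma cancels_Delta_rel: "cancels key2 (freduce2 fbracket (fhom fDelta_letter frel))" by code_simp
lemma cancels_S_rel: "cancels key1 (freduce fbracket (fanti fS_letter frel))" by code_simp
lemma cancels_coassoc:
  "cancels key3 (freduce3 []
     (fDelta_left (fDelta_letter LX) @ fscale3 (-1) 0 (fDelta_right (fDelta_letter LX))))"
  by code_simp
lemma cancels_antipode_left: "cancels key1 (fdrop_k (freduce [] (fS_left (fDelta_letter LX))))" by code_simp
lemma cancels_antipode_left_sigma: "cancels key1 (freduce [] (fsigma (fS_left (fDelta_letter LX))))" by code_simp
lemma cancels_antipode_right: "cancels key1 (freduce [] (fS_right (fDelta_letter LX)))" by code_simp

section \<open>The structure maps descend to H\<close>

lemma single_pair_tns: "Poly_Mapping.single p c = psc c (tns (mono (fst p)) (mono (snd p)))"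
  for c :: "'k::comm_ring_1"
  by (simp add: tns_mono single_psc_mono)

lemma qq_absorb_J2: "tns qt qt * y * tns qt qt - tns qt qt * y \<in> J2 (JH br (k::'k::field))"
proof (induction y rule: poly_mapping_induct)
  case zero then show ?case by (simp add: ideal_zero[OF is_ideal_J2])
next
  case (single p c)
  have "tns qt qt * Poly_Mapping.single p c * tns qt qt - tns qt qt * Poly_Mapping.single p c
     = psc c (tns (qt * mono (fst p) * qt) (qt * mono (snd p) * qt) - tns (qt * mono (fst p)) (qt * mono (snd p)))"
    by (simp add: single_pair_tns psc_mult_left[symmetric] psc_mult_right[symmetric] tns_mult psc_diff_right)
  also have "\<dots> \<in> J2 (JH br k)"
    by (intro ideal_psc[OF is_ideal_J2] tns_cong_J2 JH_qaq)
  finally show ?case .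
next
  case (add a b)
  have "tns qt qt * (a + b) * tns qt qt - tns qt qt * (a + b)
     = (tns qt qt * a * tns qt qt - tns qt qt * a) + (tns qt qt * b * tns qt qt - tns qt qt * b)"
    by (simp add: algebra_simps)
  with add show ?case by (simp add: ideal_add[OF is_ideal_J2])
qed

lemma JH_generator_cases:
  assumes "g \<in> I_gens \<union> R_gens br k"
  obtains "g = qt * qt - qt" | b where "g = qt * b * qt - qt * b"
    | x y where "g = feval k (rel_val br x y) frel"
  using assms unfolding I_gens_def R_gens_def feval_frel by blast

lemma Delta_feval: "k \<noteq> 0 \<Longrightarrow> Delta k (feval k \<phi> A) = feval2 k \<phi> (fhom fDelta_letter A)"
  if "\<And>l. Delta k (\<phi> l) = feval2 k \<phi> (fDelta_letter l)" for \<phi>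
  by (rule hom_feval) (simp_all add: that Delta_add Delta_psc Delta_mult Delta_one)

lemma Santi_feval: "k \<noteq> 0 \<Longrightarrow> Santi k (feval k \<phi> A) = feval k \<phi> (fanti fS_letter A)"
  if "\<And>l. Santi k (\<phi> l) = feval k \<phi> (fS_letter l)" for \<phi>
  by (rule antihom_feval) (simp_all add: that Santi_add Santi_psc Santi_mult Santi_one)

lemma Delta_JH:
  assumes k: "k \<noteq> 0" and a: "a \<in> JH br k"
  shows "Delta k a \<in> J2 (JH br k)"
proof (rule hom_ideal_of_into[OF is_ideal_J2 Delta_add Delta_zero Delta_mult _ a[unfolded JH_def]])
  fix g assume "g \<in> I_gens \<union> R_gens br k"
  then consider "g = qt * qt - qt" | b where "g = qt * b * qt - qt * b"
    | x y where "g = feval k (rel_val br x y) frel"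
    by (rule JH_generator_cases)
  then show "Delta k g \<in> J2 (JH br k)"
  proof cases
    case 1
    then show ?thesis
      by (simp add: Delta_diff Delta_mult Delta_qt tns_mult tns_cong_J2 JH_qq)
  next
    case 2
    then show ?thesis by (simp add: Delta_diff Delta_mult Delta_qt qq_absorb_J2)
  next
    case 3
    then have "Delta k g = feval2 k (rel_val br x y) (fhom fDelta_letter frel)"
      by (simp only: Delta_feval[OF Delta_rel_val[OF k] k])
    then show ?thesis using reduction.J2_by_cancellation[OF reduction_rel[OF k] cancels_Delta_rel] by simp
  qed
qed

lemma Eps_JH:
  assumes a: "a \<in> JH br k"
  shows "Eps a = 0"
proof (rule character_ideal_of_zero[OF Eps_add Eps_zero Eps_mult _ a[unfolded JH_def]])
  fix g assume "g \<in> I_gens \<union> R_gens br k"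
  then consider "g = qt * qt - qt" | b where "g = qt * b * qt - qt * b"
    | x y where "g = feval k (rel_val br x y) frel"
    by (rule JH_generator_cases)
  then show "Eps g = 0"
    by cases (simp_all add: Eps_diff Eps_add Eps_mult Eps_qt Eps_psc Eps_hat feval_frel)
qed

lemma Santi_JH:
  assumes k: "k \<noteq> 0" and a: "a \<in> JH br k"
  shows "Santi k a \<in> JH br k"
proof (rule antihom_ideal_of_into[OF is_ideal_JH Santi_add Santi_zero Santi_mult _ a[unfolded JH_def]])
  fix g assume "g \<in> I_gens \<union> R_gens br k"
  then consider "g = qt * qt - qt" | b where "g = qt * b * qt - qt * b"
    | x y where "g = feval k (rel_val br x y) frel"
    by (rule JH_generator_cases)
  then show "Santi k g \<in> JH br k"
  proof cases
    case 1
    have "Santi k g = qt * qt - qt"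
      by (simp add: 1 Santi_diff Santi_mult Santi_qt algebra_simps)
    then show ?thesis by (simp add: JH_qq)
  next
    case 2
    have "Santi k g = qt * Santi k b * qt - qt * Santi k b"
      by (simp add: 2 Santi_diff Santi_mult Santi_qt algebra_simps)
    then show ?thesis by (simp add: JH_qaq)
  next
    case 3
    then have "Santi k g = feval k (rel_val br x y) (fanti fS_letter frel)"
      by (simp only: Santi_feval[OF Santi_rel_val[OF k] k])
    then show ?thesis using reduction.ideal_by_cancellation[OF reduction_rel[OF k] cancels_S_rel] by simp
  qed
qed

section \<open>Coassociativity and counit\<close>

lemmas DL_Delta_tns = DL_tns[OF Delta_add Delta_psc]
lemmas DR_Delta_tns = DR_tns[OF Delta_add Delta_psc]
lemmas DL_Delta_add = DL_add[OF Delta_add Delta_psc]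
lemmas DR_Delta_add = DR_add[OF Delta_add Delta_psc]
lemmas DL_Delta_psc = DL_psc[OF Delta_add Delta_psc]
lemmas DR_Delta_psc = DR_psc[OF Delta_add Delta_psc]
lemmas DL_Delta_mult = DL_mult[OF Delta_add Delta_psc Delta_mult Delta_one]
lemmas DR_Delta_mult = DR_mult[OF Delta_add Delta_psc Delta_mult Delta_one]
lemmas DL_Delta_one = DL_one[OF Delta_add Delta_psc Delta_mult Delta_one]
lemmas DR_Delta_one = DR_one[OF Delta_add Delta_psc Delta_mult Delta_one]

lemma Delta_fword:
  assumes h: "\<And>l. Delta k (\<phi> l) = feval2 k \<phi> (fDelta_letter l)" and k: "k \<noteq> 0"
  shows "Delta k (fword \<phi> u) = feval2 k \<phi> (fhom_word fDelta_letter u)"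
proof -
  have "Delta k (feval k \<phi> [(1, 0, u)]) = feval2 k \<phi> (fhom fDelta_letter [(1, 0, u)])"
    by (rule Delta_feval[OF h k])
  then show ?thesis by (simp add: feval_Cons fcoeff_simps fhom_def feval2_fscale2[OF k])
qed

lemma tnsL_feval2: "tnsL (feval2 k \<phi> Y) (fword \<phi> v) = feval3 k \<phi> (map (\<lambda>(m, f, a, b). (m, f, a, b, v)) Y)"
proof (induction Y)
  case (Cons t Y)
  obtain n e a b where t: "t = (n, e, a, b)" by (cases t) auto
  with Cons show ?case by (simp add: feval2_Cons feval3_Cons tnsL_add1 tnsL_psc1 tnsL_tns)
qed (simp add: feval2_def)

lemma tnsR_feval2: "tnsR (fword \<phi> u) (feval2 k \<phi> Y) = feval3 k \<phi> (map (\<lambda>(m, f, a, b). (m, f, u, a, b)) Y)"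
proof (induction Y)
  case (Cons t Y)
  obtain n e a b where t: "t = (n, e, a, b)" by (cases t) auto
  with Cons show ?case by (simp add: feval2_Cons feval3_Cons tnsR_add2 tnsR_psc2 tnsR_tns)
qed (simp add: feval2_def)

lemma DL_feval2:
  assumes h: "\<And>l. Delta k (\<phi> l) = feval2 k \<phi> (fDelta_letter l)" and k: "k \<noteq> 0"
  shows "DL (Delta k) (feval2 k \<phi> X) = feval3 k \<phi> (fDelta_left X)"
proof (induction X)
  case Nil then show ?case by (simp add: fDelta_left_def DL_alt)
next
  case (Cons t X)
  obtain n e u v where t: "t = (n, e, u, v)" by (cases t) auto
  with Cons show ?case
    by (simp add: feval2_Cons fDelta_left_def feval3_append feval3_fscale3[OF k] DL_Delta_add DL_Delta_psc DL_Delta_tns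
        Delta_fword[OF h k] tnsL_feval2)
qed

lemma DR_feval2:
  assumes h: "\<And>l. Delta k (\<phi> l) = feval2 k \<phi> (fDelta_letter l)" and k: "k \<noteq> 0"
  shows "DR (Delta k) (feval2 k \<phi> X) = feval3 k \<phi> (fDelta_right X)"
proof (induction X)
  case Nil then show ?case by (simp add: fDelta_right_def DR_alt)
next
  case (Cons t X)
  obtain n e u v where t: "t = (n, e, u, v)" by (cases t) auto
  with Cons show ?case
    by (simp add: feval2_Cons fDelta_right_def feval3_append feval3_fscale3[OF k] DR_Delta_add DR_Delta_psc DR_Delta_tns
        Delta_fword[OF h k] tnsR_feval2)
qed

lemma gen_eq_gen_val: "gen (Some j) = gen_val j LX" by (simp add: gen_val_def)

lemma Delta_coassoc_gen:
  assumes k: "k \<noteq> 0"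
  shows "DL (Delta k) (Delta k (gen v)) - DR (Delta k) (Delta k (gen v)) \<in> J3 (JH br k)"
proof (cases v)
  case None
  then show ?thesis
    by (simp add: qt_def[symmetric] Delta_qt DL_Delta_tns DR_Delta_tns tnsL_tns tnsR_tns ideal_zero[OF is_ideal_J3])
next
  case (Some j)
  have "DL (Delta k) (Delta k (gen v)) - DR (Delta k) (Delta k (gen v))
      = feval3 k (gen_val j) (fDelta_left (fDelta_letter LX) @ fscale3 (-1) 0 (fDelta_right (fDelta_letter LX)))"
    by (simp add: Some gen_eq_gen_val Delta_gen_val[OF k] DL_feval2[OF Delta_gen_val[OF k] k] DR_feval2[OF Delta_gen_val[OF k] k]
        feval3_append feval3_fscale3[OF k] fcoeff_simps psc_uminus_left)
  then show ?thesis using reduction.J3_by_cancellation[OF reduction_gen[OF k] cancels_coassoc] by simp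
qed

lemma Delta_coassoc:
  assumes k: "k \<noteq> 0"
  shows "DL (Delta k) (Delta k a) - DR (Delta k) (Delta k a) \<in> J3 (JH br k)"
proof (induction a rule: tens_induct)
  case zero then show ?case by (simp add: Delta_zero DL_alt DR_alt ideal_zero[OF is_ideal_J3])
next
  case (add a b) then show ?case
    by (simp add: Delta_add DL_Delta_add DR_Delta_add ideal_cong_add[OF is_ideal_J3])
next
  case (psc c a) then show ?case
    by (simp add: Delta_psc DL_Delta_psc DR_Delta_psc ideal_cong_psc[OF is_ideal_J3])
next
  case one then show ?case by (simp add: Delta_one DL_Delta_one DR_Delta_one ideal_zero[OF is_ideal_J3])
next
  case (gen v m) then show ?case
    by (simp add: Delta_mult DL_Delta_mult DR_Delta_mult ideal_cong_mult[OF is_ideal_J3 Delta_coassoc_gen[OF k]])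
qed

lemmas EL_Eps_tns = EL_tns[OF Eps_add Eps_psc]
lemmas ER_Eps_tns = ER_tns[OF Eps_add Eps_psc]
lemmas EL_Eps_mult = EL_mult[OF Eps_add Eps_psc Eps_mult Eps_one]
lemmas ER_Eps_mult = ER_mult[OF Eps_add Eps_psc Eps_mult Eps_one]
lemmas EL_Eps_one = EL_one[OF Eps_add Eps_psc Eps_mult Eps_one]
lemmas ER_Eps_one = ER_one[OF Eps_add Eps_psc Eps_mult Eps_one]

lemma EL_Eps_add: "EL E (a + b) = EL E a + EL E b" by (simp add: EL_alt linT_add)
lemma EL_Eps_psc: "EL E (psc c a) = psc c (EL E a)" by (simp add: EL_alt linT_psc)
lemma ER_Eps_add: "ER E (a + b) = ER E a + ER E b" by (simp add: ER_alt linT_add)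
lemma ER_Eps_psc: "ER E (psc c a) = psc c (ER E a)" by (simp add: ER_alt linT_psc)

lemma Delta_counit_gen: "EL Eps (Delta k (gen v)) = gen v \<and> ER Eps (Delta k (gen v)) = gen v"
proof (cases v)
  case None
  then show ?thesis by (simp add: qt_def[symmetric] Delta_qt EL_Eps_tns ER_Eps_tns Eps_qt)
next
  case (Some j)
  then show ?thesis
    by (simp add: Delta_gen Dgen_def Let_def EL_Eps_tns ER_Eps_tns EL_Eps_add ER_Eps_add tns_add_left tns_add_right
        Eps_add Eps_diff Eps_psc Eps_mult Eps_qt Eps_gen Eps_one Eps_uminus qt_def[symmetric])
qed

lemma Delta_counit: "EL Eps (Delta k a) = a \<and> ER Eps (Delta k a) = a"
proof (induction a rule: tens_induct)
  case zero then show ?case by (simp add: Delta_zero EL_alt ER_alt)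
next
  case (add a b) then show ?case by (simp add: Delta_add EL_Eps_add ER_Eps_add)
next
  case (psc c a) then show ?case by (simp add: Delta_psc EL_Eps_psc ER_Eps_psc)
next
  case one then show ?case by (simp add: Delta_one EL_Eps_one ER_Eps_one)
next
  case (gen v m) then show ?case by (simp add: Delta_mult EL_Eps_mult ER_Eps_mult Delta_counit_gen)
qed

lemma sigma_add: "sigma (a + b) = sigma a + sigma b"
  by (simp add: sigma_def algebra_simps)
lemma sigma_zero: "sigma 0 = 0" by (simp add: sigma_def)
lemma sigma_one: "sigma 1 = 1" by (simp add: sigma_def)
lemma sigma_psc: "sigma (psc c a) = psc c (sigma a)"
  by (simp add: sigma_def psc_add_right psc_diff_right psc_mult_left[symmetric] psc_mult_right[symmetric])

lemma sigma_JH: "a \<in> JH br k \<Longrightarrow> sigma a \<in> JH br k"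
  unfolding sigma_def by (intro ideal_diff[OF is_ideal_JH] ideal_add[OF is_ideal_JH] ideal_mult_left[OF is_ideal_JH] ideal_mult_right[OF is_ideal_JH])

lemma sigma_mult_JH: "sigma (a * b) - sigma a * sigma b \<in> JH br k"
proof -
  have "sigma (a * b) - sigma a * sigma b = (qt * (a * b) * qt - qt * (a * b)) - (qt * a * qt - qt * a) * b
      + a * (qt * qt - qt) * b - a * (qt * b * qt - qt * b)"
    by (simp add: sigma_def algebra_simps)
  also have "\<dots> \<in> JH br k"
    by (intro ideal_add[OF is_ideal_JH] ideal_diff[OF is_ideal_JH] ideal_mult_right[OF is_ideal_JH]
        ideal_mult_left[OF is_ideal_JH] ideal_mult_both[OF is_ideal_JH] JH_qaq JH_qq)
  finally show ?thesis .
qed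

section \<open>The antipode-like identities\<close>

lemmas mSL_Santi_tns = mSL_tns[OF Santi_add Santi_psc]
lemmas mSR_Santi_tns = mSR_tns[OF Santi_add Santi_psc]
lemmas mSL_Santi_add = mSL_add[OF Santi_add Santi_psc]
lemmas mSR_Santi_add = mSR_add[OF Santi_add Santi_psc]
lemmas mSL_Santi_psc = mSL_psc[OF Santi_add Santi_psc]
lemmas mSR_Santi_psc = mSR_psc[OF Santi_add Santi_psc]
lemmas mSL_Santi_mult = mSL_mult[OF Santi_add Santi_psc Santi_mult]
lemmas mSR_Santi_mult = mSR_mult[OF Santi_add Santi_psc Santi_mult]
lemmas mSL_at_Santi_cong = mSL_at_cong[OF Santi_add Santi_psc]
lemmas mSR_at_Santi_cong = mSR_at_cong[OF Santi_add Santi_psc]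
lemmas mSL_at_Santi_csc = mSL_at_csc[OF Santi_add Santi_psc]
lemmas mSR_at_Santi_csc = mSR_at_csc[OF Santi_add Santi_psc]
lemmas mSL_at_Santi_one = mSL_at_one[OF Santi_add Santi_psc]

lemma Santi_fword:
  assumes h: "\<And>l. Santi k (\<phi> l) = feval k \<phi> (fS_letter l)" and k: "k \<noteq> 0"
  shows "Santi k (fword \<phi> u) = feval k \<phi> (fanti_word fS_letter u)"
proof -
  have "Santi k (feval k \<phi> [(1, 0, u)]) = feval k \<phi> (fanti fS_letter [(1, 0, u)])"
    by (rule Santi_feval[OF h k])
  then show ?thesis by (simp add: feval_Cons fcoeff_simps fanti_def feval_fscale[OF k])
qed

lemma feval_single: "feval k \<phi> [(1, 0, v)] = fword \<phi> v" by (simp add: feval_Cons fcoeff_simps)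

lemma mSL_feval2:
  assumes h: "\<And>l. Santi k (\<phi> l) = feval k \<phi> (fS_letter l)" and k: "k \<noteq> 0"
  shows "mSL (Santi k) (feval2 k \<phi> X) = feval k \<phi> (fS_left X)"
proof (induction X)
  case Nil then show ?case by (simp add: fS_left_def mSL_alt[OF Santi_add Santi_psc])
next
  case (Cons t X)
  obtain n e u v where t: "t = (n, e, u, v)" by (cases t) auto
  with Cons show ?case
    by (simp add: feval2_Cons fS_left_def feval_append feval_fscale[OF k] mSL_Santi_add mSL_Santi_psc mSL_Santi_tns
        Santi_fword[OF h k] feval_fmult[OF k] feval_single)
qed

lemma mSR_feval2:
  assumes h: "\<And>l. Santi k (\<phi> l) = feval k \<phi> (fS_letter l)" and k: "k \<noteq> 0"
  shows "mSR (Santi k) (feval2 k \<phi> X) = feval k \<phi> (fS_right X)"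
proof (induction X)
  case Nil then show ?case by (simp add: fS_right_def mSR_alt[OF Santi_add Santi_psc])
next
  case (Cons t X)
  obtain n e u v where t: "t = (n, e, u, v)" by (cases t) auto
  with Cons show ?case
    by (simp add: feval2_Cons fS_right_def feval_append feval_fscale[OF k] mSR_Santi_add mSR_Santi_psc mSR_Santi_tns
        Santi_fword[OF h k] feval_fmult[OF k] feval_single)
qed

lemma sigma_feval: "k \<noteq> 0 \<Longrightarrow> \<phi> LQ = qt \<Longrightarrow> sigma (feval k \<phi> A) = feval k \<phi> (fsigma A)"
  by (simp add: sigma_def fsigma_def feval_append feval_fmult feval_fscale fq_def feval_single fword_Cons fcoeff_simps
      psc_uminus_left algebra_simps)

lemma feval_fdrop_k: "feval 1 \<phi> (fdrop_k A) = feval 1 \<phi> A"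
proof (induction A)
  case (Cons t A)
  obtain n e u where t: "t = (n, e, u)" by (cases t) auto
  with Cons show ?case by (simp add: fdrop_k_def feval_Cons fcoeff_def)
qed (simp add: fdrop_k_def)

lemma ideal_by_cancellation_k1:
  assumes r: "reduction 1 \<phi> J fZ" and z: "cancels key1 (fdrop_k (freduce fZ A))"
  shows "feval 1 \<phi> A \<in> J"
proof -
  have "feval 1 \<phi> (freduce fZ A) = 0" using feval_cancels[OF z, of 1 \<phi>] by (simp add: feval_fdrop_k)
  then show ?thesis using reduction.freduce_cong[OF r, of A] by simp
qed

lemma Eps_SantiL_gen: "Eps (SantiL k (gen (Some j))) = 0"
  by (simp add: SantiL_def Eps_add Eps_psc Eps_mult Eps_gen)

lemma Eps_Santi_gen: "Eps (Santi k (gen v)) = 0"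
  by (cases v) (simp_all add: Santi_gen Sgen_def Eps_diff Eps_one Eps_qt Eps_gen
      Eps_SantiL_gen[unfolded SantiL_def] Eps_add Eps_psc Eps_mult)

lemma one_minus_qt_mult_qt_JH: "(1 - qt) * qt \<in> JH br k"
  using ideal_uminus[OF is_ideal_JH JH_qq[of br k]] by (simp add: algebra_simps)
lemma qt_mult_one_minus_qt_JH: "qt * (1 - qt) \<in> JH br k"
  using ideal_uminus[OF is_ideal_JH JH_qq[of br k]] by (simp add: algebra_simps)

lemma antipode_left_gen_k1:
  assumes k1: "k = 1"
  shows "mSL (Santi k) (Delta k (gen v)) - csc (Eps (Santi k (gen v))) \<in> JH br k"
proof (cases v)
  case None
  then show ?thesis
    by (simp add: qt_def[symmetric] Delta_qt mSL_Santi_tns Santi_qt Eps_Santi_gen csc_zero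
        one_minus_qt_mult_qt_JH Eps_diff Eps_one Eps_qt)
next
  case (Some j)
  have k: "k \<noteq> 0" using k1 by simp
  have "mSL (Santi k) (Delta k (gen v)) = feval k (gen_val j) (fS_left (fDelta_letter LX))"
    by (simp add: Some gen_eq_gen_val Delta_gen_val[OF k] mSL_feval2[OF Santi_gen_val[OF k] k])
  moreover have "feval k (gen_val j) (fS_left (fDelta_letter LX)) \<in> JH br k"
    using ideal_by_cancellation_k1[OF reduction_gen[OF k, unfolded k1] cancels_antipode_left] k1 by simp
  ultimately show ?thesis by (simp add: Eps_Santi_gen csc_zero)
qed

lemma antipode_left_sigma_gen:
  assumes k: "k \<noteq> 0"
  shows "sigma (mSL (Santi k) (Delta k (gen v))) - csc (Eps (Santi k (gen v))) \<in> JH br k"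
proof (cases v)
  case None
  then show ?thesis by (simp add: qt_def[symmetric] Delta_qt mSL_Santi_tns Santi_qt Eps_Santi_gen csc_zero
        sigma_JH one_minus_qt_mult_qt_JH Eps_diff Eps_one Eps_qt)
next
  case (Some j)
  have "sigma (mSL (Santi k) (Delta k (gen v))) = feval k (gen_val j) (fsigma (fS_left (fDelta_letter LX)))"
    using sigma_feval[OF k, of "gen_val j"]
    by (simp add: Some gen_eq_gen_val Delta_gen_val[OF k] mSL_feval2[OF Santi_gen_val[OF k] k], simp add: gen_val_def[of j LQ])
  moreover have "feval k (gen_val j) (fsigma (fS_left (fDelta_letter LX))) \<in> JH br k"
    using reduction.ideal_by_cancellation[OF reduction_gen[OF k] cancels_antipode_left_sigma] .
  ultimately show ?thesis by (simp add: Eps_Santi_gen csc_zero)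
qed

lemma antipode_right_gen:
  assumes k: "k \<noteq> 0"
  shows "mSR (Santi k) (Delta k (gen v)) - csc (Eps (Santi k (gen v))) \<in> JH br k"
proof (cases v)
  case None
  then show ?thesis
    by (simp add: qt_def[symmetric] Delta_qt mSR_Santi_tns Santi_qt Eps_Santi_gen csc_zero
        qt_mult_one_minus_qt_JH Eps_diff Eps_one Eps_qt)
next
  case (Some j)
  have "mSR (Santi k) (Delta k (gen v)) = feval k (gen_val j) (fS_right (fDelta_letter LX))"
    by (simp add: Some gen_eq_gen_val Delta_gen_val[OF k] mSR_feval2[OF Santi_gen_val[OF k] k])
  moreover have "feval k (gen_val j) (fS_right (fDelta_letter LX)) \<in> JH br k"
    using reduction.ideal_by_cancellation[OF reduction_gen[OF k] cancels_antipode_right] .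
  ultimately show ?thesis by (simp add: Eps_Santi_gen csc_zero)
qed

lemmas mSL_at_Santi_def = mSL_at_def[OF Santi_add Santi_psc]

lemma sigma_mSL_at:
  assumes l: "sigma l - csc c \<in> JH br k"
  shows "sigma (mSL_at (Santi k) y l) - psc c (sigma (mSL_at (Santi k) y 1)) \<in> JH br k"
proof (induction y rule: poly_mapping_induct)
  case zero then show ?case by (simp add: mSL_at_Santi_def sigma_zero ideal_zero[OF is_ideal_JH])
next
  case (add a b)
  then show ?case
    by (simp add: mSL_at_Santi_def linT_add sigma_add psc_add_right ideal_cong_add[OF is_ideal_JH])
next
  case (single p d)
  define A where "A = Santi k (mono (fst p))"
  define B where "B = (mono (snd p) :: ('a, 'b) tens)"
  have s1: "sigma (A * l * B) - sigma (A * l) * sigma B \<in> JH br k" by (rule sigma_mult_JH)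
  have s2: "sigma (A * l) * sigma B - sigma A * sigma l * sigma B \<in> JH br k"
    by (rule ideal_cong_mult[OF is_ideal_JH sigma_mult_JH ideal_cong_refl[OF is_ideal_JH]])
  have s3: "sigma A * sigma l * sigma B - sigma A * csc c * sigma B \<in> JH br k"
    by (rule ideal_cong_mult_both[OF is_ideal_JH l])
  have e: "sigma A * csc c * sigma B = psc c (sigma A * sigma B)"
    by (simp add: psc_one_eq_csc[symmetric] psc_mult_right[symmetric] psc_mult_left[symmetric])
  have s4: "psc c (sigma A * sigma B) - psc c (sigma (A * B)) \<in> JH br k"
    by (rule ideal_cong_psc[OF is_ideal_JH ideal_cong_sym[OF is_ideal_JH sigma_mult_JH]])
  have X: "sigma (A * l * B) - psc c (sigma (A * B)) \<in> JH br k"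
    using ideal_cong_trans[OF is_ideal_JH s1 ideal_cong_trans[OF is_ideal_JH s2 ideal_cong_trans[OF is_ideal_JH s3 s4[folded e]]]] .
  have "sigma (mSL_at (Santi k) (Poly_Mapping.single p d) l) - psc c (sigma (mSL_at (Santi k) (Poly_Mapping.single p d) 1))
      = psc d (sigma (A * l * B) - psc c (sigma (A * B)))"
    by (simp add: mSL_at_Santi_def linT_single A_def B_def sigma_psc psc_psc psc_diff_right mult.commute)
  then show ?case using ideal_psc[OF is_ideal_JH X] by simp
qed

lemma mSL_Santi_one: "mSL (Santi k) 1 = 1"
  using mSL_Santi_tns[where k = k and a = 1 and b = 1] by (simp add: tns_one Santi_one)
lemma mSR_Santi_one: "mSR (Santi k) 1 = 1"
  using mSR_Santi_tns[where k = k and a = 1 and b = 1] by (simp add: tns_one Santi_one)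

lemma csc_Eps_Santi_mult: "csc (Eps (Santi k (a * b))) = psc (Eps (Santi k a)) (csc (Eps (Santi k b)) :: 'm::monoid_add \<Rightarrow>\<^sub>0 'k::field)"
  by (simp add: Santi_mult Eps_mult csc_def psc_single mult.commute)
lemma csc_Eps_Santi_mult': "csc (Eps (Santi k (a * b))) = psc (Eps (Santi k b)) (csc (Eps (Santi k a)) :: 'm::monoid_add \<Rightarrow>\<^sub>0 'k::field)"
  by (simp add: Santi_mult Eps_mult csc_def psc_single)

lemma antipode_left_k1:
  assumes k1: "k = 1"
  shows "mSL (Santi k) (Delta k a) - csc (Eps (Santi k a)) \<in> JH br k"
proof (induction a rule: tens_induct)
  case zero then show ?case
    by (simp add: Delta_zero Santi_zero Eps_zero csc_zero mSL_alt[OF Santi_add Santi_psc] ideal_zero[OF is_ideal_JH])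
next
  case (add a b) then show ?case
    by (simp add: Delta_add Santi_add Eps_add csc_add mSL_Santi_add ideal_cong_add[OF is_ideal_JH])
next
  case (psc c a) then show ?case
    by (simp add: Delta_psc Santi_psc Eps_psc csc_mult mSL_Santi_psc ideal_cong_psc[OF is_ideal_JH])
next
  case one then show ?case
    by (simp add: Delta_one Santi_one Eps_one csc_one mSL_Santi_one ideal_zero[OF is_ideal_JH])
next
  case (gen v m)
  define cv where "cv = Eps (Santi k (gen v))"
  define cm where "cm = Eps (Santi k m)"
  have h1: "mSL_at (Santi k) (Delta k m) (mSL (Santi k) (Delta k (gen v))) - psc cv (mSL (Santi k) (Delta k m)) \<in> JH br k"
    using mSL_at_Santi_cong[OF is_ideal_JH antipode_left_gen_k1[OF k1]] unfolding cv_def by (simp add: mSL_at_Santi_csc)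
  have h2: "psc cv (mSL (Santi k) (Delta k m)) - psc cv (csc cm) \<in> JH br k"
    using ideal_cong_psc[OF is_ideal_JH gen] unfolding cm_def .
  have e1: "mSL (Santi k) (Delta k (gen v * m)) = mSL_at (Santi k) (Delta k m) (mSL (Santi k) (Delta k (gen v)))"
    by (simp add: Delta_mult mSL_Santi_mult)
  show ?case unfolding e1 csc_Eps_Santi_mult using ideal_cong_trans[OF is_ideal_JH h1 h2] unfolding cv_def cm_def .
qed

lemma antipode_left_sigma:
  assumes k: "k \<noteq> 0"
  shows "sigma (mSL (Santi k) (Delta k a)) - csc (Eps (Santi k a)) \<in> JH br k"
proof (induction a rule: tens_induct)
  case zero then show ?case
    by (simp add: Delta_zero Santi_zero Eps_zero csc_zero sigma_zero mSL_alt[OF Santi_add Santi_psc] ideal_zero[OF is_ideal_JH])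
next
  case (add a b) then show ?case
    by (simp add: Delta_add Santi_add Eps_add csc_add sigma_add mSL_Santi_add ideal_cong_add[OF is_ideal_JH])
next
  case (psc c a) then show ?case
    by (simp add: Delta_psc Santi_psc Eps_psc csc_mult sigma_psc mSL_Santi_psc ideal_cong_psc[OF is_ideal_JH])
next
  case one then show ?case
    by (simp add: Delta_one Santi_one Eps_one csc_one sigma_one mSL_Santi_one ideal_zero[OF is_ideal_JH])
next
  case (gen v m)
  define cv where "cv = Eps (Santi k (gen v))"
  define cm where "cm = Eps (Santi k m)"
  have h1: "sigma (mSL_at (Santi k) (Delta k m) (mSL (Santi k) (Delta k (gen v))))
      - psc cv (sigma (mSL (Santi k) (Delta k m))) \<in> JH br k"
    using sigma_mSL_at[OF antipode_left_sigma_gen[OF k, of v br], where y="Delta k m"] unfolding cv_def by (simp add: mSL_at_Santi_one)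
  have h2: "psc cv (sigma (mSL (Santi k) (Delta k m))) - psc cv (csc cm) \<in> JH br k"
    using ideal_cong_psc[OF is_ideal_JH gen] unfolding cm_def .
  have e1: "sigma (mSL (Santi k) (Delta k (gen v * m))) = sigma (mSL_at (Santi k) (Delta k m) (mSL (Santi k) (Delta k (gen v))))"
    by (simp add: Delta_mult mSL_Santi_mult)
  show ?case unfolding e1 csc_Eps_Santi_mult using ideal_cong_trans[OF is_ideal_JH h1 h2] unfolding cv_def cm_def .
qed

lemma antipode_right:
  assumes k: "k \<noteq> 0"
  shows "mSR (Santi k) (Delta k a) - csc (Eps (Santi k a)) \<in> JH br k"
proof (induction a rule: tens_induct)
  case zero then show ?case
    by (simp add: Delta_zero Santi_zero Eps_zero csc_zero mSR_alt[OF Santi_add Santi_psc] ideal_zero[OF is_ideal_JH])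
next
  case (add a b) then show ?case
    by (simp add: Delta_add Santi_add Eps_add csc_add mSR_Santi_add ideal_cong_add[OF is_ideal_JH])
next
  case (psc c a) then show ?case
    by (simp add: Delta_psc Santi_psc Eps_psc csc_mult mSR_Santi_psc ideal_cong_psc[OF is_ideal_JH])
next
  case one then show ?case
    by (simp add: Delta_one Santi_one Eps_one csc_one mSR_Santi_one ideal_zero[OF is_ideal_JH])
next
  case (gen v m)
  define cv where "cv = Eps (Santi k (gen v))"
  define cm where "cm = Eps (Santi k m)"
  have h1: "mSR_at (Santi k) (Delta k (gen v)) (mSR (Santi k) (Delta k m)) - psc cm (mSR (Santi k) (Delta k (gen v))) \<in> JH br k"
    using mSR_at_Santi_cong[OF is_ideal_JH gen] unfolding cm_def by (simp add: mSR_at_Santi_csc)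
  have h2: "psc cm (mSR (Santi k) (Delta k (gen v))) - psc cm (csc cv) \<in> JH br k"
    using ideal_cong_psc[OF is_ideal_JH antipode_right_gen[OF k]] unfolding cv_def .
  have e1: "mSR (Santi k) (Delta k (gen v * m)) = mSR_at (Santi k) (Delta k (gen v)) (mSR (Santi k) (Delta k m))"
    by (simp add: Delta_mult mSR_Santi_mult)
  show ?case unfolding e1 csc_Eps_Santi_mult' using ideal_cong_trans[OF is_ideal_JH h1 h2] unfolding cv_def cm_def .
qed

lemma bialgebra_on_JH:
  assumes k: "k \<noteq> 0"
  shows "bialgebra_on (JH br k) (Delta k) Eps"
  unfolding bialgebra_on_def
proof (intro conjI ballI allI)
  fix a assume "a \<in> JH br k"
  then show "Delta k a \<in> J2 (JH br k)" by (rule Delta_JH[OF k])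
next
  fix a assume "a \<in> JH br k"
  then show "Eps a = 0" by (rule Eps_JH)
next
  fix a show "DL (Delta k) (Delta k a) - DR (Delta k) (Delta k a) \<in> J3 (JH br k)" by (rule Delta_coassoc[OF k])
next
  fix a show "EL Eps (Delta k a) - a \<in> JH br k" using Delta_counit[of k a] by (simp add: ideal_zero[OF is_ideal_JH])
next
  fix a show "ER Eps (Delta k a) - a \<in> JH br k" using Delta_counit[of k a] by (simp add: ideal_zero[OF is_ideal_JH])
qed (simp_all add: Delta_add Delta_psc Delta_mult Delta_one Eps_add Eps_psc Eps_mult Eps_one
      ideal_zero[OF is_ideal_J2])

lemma linear_on_Santi:
  assumes k: "k \<noteq> 0"
  shows "linear_on (JH br k) (Santi k)"
  unfolding linear_on_def
  using Santi_JH[OF k, of _ br] by (simp add: Santi_add Santi_psc ideal_zero[OF is_ideal_JH])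

lemma alg_hom_on_sigma: "alg_hom_on (JH br k) sigma"
  unfolding alg_hom_on_def linear_on_def
  using sigma_JH[of _ br k] sigma_mult_JH[of _ _ br k] by (simp add: sigma_add sigma_psc sigma_one ideal_zero[OF is_ideal_JH])

theorem proposition6p1:
  fixes br :: "('x \<Rightarrow>\<^sub>0 'k::field) \<Rightarrow> ('x \<Rightarrow>\<^sub>0 'k) \<Rightarrow> ('x \<Rightarrow>\<^sub>0 'k)"
    and k :: 'k
  assumes "right_leibniz br"
  shows "(k = 1 \<longrightarrow> hopf_like1 (JH br k) (Delta k) Eps (Santi k))
       \<and> (k \<noteq> 0 \<longrightarrow> hopf_like2 (JH br k) (Delta k) Eps sigma (Santi k))"
proof (intro conjI impI)
  assume k1: "k = 1"
  then have k: "k \<noteq> 0" by simp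
  show "hopf_like1 (JH br k) (Delta k) Eps (Santi k)"
    unfolding hopf_like1_def
    using bialgebra_on_JH[OF k] linear_on_Santi[OF k] antipode_left_k1[OF k1] antipode_right[OF k]
    by blast
next
  assume k: "k \<noteq> 0"
  show "hopf_like2 (JH br k) (Delta k) Eps sigma (Santi k)"
    unfolding hopf_like2_def
    using bialgebra_on_JH[OF k] linear_on_Santi[OF k] alg_hom_on_sigma antipode_left_sigma[OF k]
      antipode_right[OF k]
    by blast
qed

end
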